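(* Let $(\mathcal H,\Delta,\delta,\mu,\mathbf 1,S,\beta)$ be a braided Hopf algebra and let $K:\mathcal H\otimes\mathcal H\to\mathbb C$ be a $\beta$-invariant linear functional. Put $\widetilde K:=K\circ(S\otimes\mathrm{id})\circ\Delta:\mathcal H\to\mathbb C$. If $K\star\mu=\mu\star K$, then $\widetilde K\star\mathrm{id}=\mathrm{id}\star\widetilde K$, i.e. $(\widetilde K\otimes\mathrm{id})\circ\Delta=(\mathrm{id}\otimes\widetilde K)\circ\Delta$ as maps $\mathcal H\to\mathcal H$.
   Context: Braided vector space $(V,\beta)$: $\beta\in\mathrm{Aut}(V\otimes V)$ satisfying the braid equation $(\beta\otimes\mathrm{id})(\mathrm{id}\otimes\beta)(\beta\otimes\mathrm{id})=(\mathrm{id}\otimes\beta)(\beta\otimes\mathrm{id})(\mathrm{id}\otimes\beta)$. $\beta_{m,n}$: $\beta_{0,0}=\mathrm{id}_{\mathbb C}$, $\beta_{1,0}=\beta_{0,1}=\mathrm{id}_V$, $\beta_{1,m+1}=(\mathrm{id}_V\otimes\beta_{1,m})(\beta\otimes\mathrm{id})$, $\beta_{n+1,m}=(\beta_{n,m}\otimes\mathrm{id}_V)(\mathrm{id}\otimes\beta_{1,m})$. $f:V^{\otimes m}\to V^{\otimes n}$ is $\beta$-invariant if $(f\otimes\mathrm{id})\beta_{1,m}=\beta_{1,n}(\mathrm{id}\otimes f)$, $\beta^{-1}$-invariant if $(\mathrm{id}\otimes f)\beta_{m,1}=\beta_{n,1}(f\otimes\mathrm{id})$, $\beta$-compatible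 if both; for a functional $K$ on $V\otimes V$, $\beta$-invariance means $(K\otimes\mathrm{id})\circ\beta_{1,2}=\mathrm{id}\otimes K$. A braided bialgebra $(\mathcal H,\Delta,\delta,\mu,\mathbf 1,\beta)$: unital associative algebra and coassociative counital coalgebra with braiding $\beta$ such that $\mu,\mathbf 1,\Delta,\delta$ are $\beta$-compatible, $\Delta\circ\mu=(\mu\otimes\mu)\circ\Lambda$ with $\Lambda:=(\mathrm{id}\otimes\beta\otimes\mathrm{id})(\Delta\otimes\Delta)$, $\Delta(\mathbf 1)=\mathbf 1\otimes\mathbf 1$, $\delta\circ\mu=\delta\otimes\delta$, $\delta(\mathbf 1)=1$. It is a braided Hopf algebra if there is a linear $S:\mathcal H\to\mathcal H$ with $\mu\circ(S\otimes\mathrm{id})\circ\Delta=\mathbf 1\delta=\mu\circ(\mathrm{id}\otimes S)\circ\Delta$. Convolution: $f\star g=m\circ(f\otimes g)\circ\Delta_{\mathrm{coalg}}$; on $\mathcal H\otimes\mathcal H$ the comultiplication is $\Lambda$, so $K\star\mu=(K\otimes\mu)\circ\Lambda$ and $\mu\star K=(\mu\otimes K)\circ\Lambda$ (identifying $\mathbb C\otimes\mathcal H\cong\mathcal H$). *)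

theory Defs
  imports Complex_Main "HOL-Library.Poly_Mapping"
begin

(* 
  Every complex vector space has a basis, so we take the underlying space of
  H to be the free complex vector space on a basis type 'b.  Then the tensor power
  H^{\<otimes>n} is the free complex vector space on the words of length n over 'b, and we
  let all tensor powers live inside the tensor algebra  'b list \<Rightarrow>\<^sub>0 complex
  (finitely supported coefficient functions on words); an element is homogeneous of
  degree n if it is supported on words of length n.  The scalars C = H^{\<otimes>0} are spanned
  by the empty word, so the identifications C \<otimes> H = H = H \<otimes> C and the associativity of
  tensor products are strict (concatenation of words).

  A linear map f : H^{\<otimes>m} \<rightarrow> H^{\<otimes>n} is given by its values on the basis words of
  length m (type 'b list \<Rightarrow> tens); it is extended linearly by lapp.
 *)

type_synonym 'b tens = "'b list \<Rightarrow>\<^sub>0 complex"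
type_synonym 'b lmap = "'b list \<Rightarrow> 'b tens"

definition lapp :: "'b lmap \<Rightarrow> 'b tens \<Rightarrow> 'b tens" where
  "lapp f v = (\<Sum>w\<in>Poly_Mapping.keys v. Poly_Mapping.map (\<lambda>z. Poly_Mapping.lookup v w * z) (f w))"

definition tmul :: "'b tens \<Rightarrow> 'b tens \<Rightarrow> 'b tens" where
  "tmul u v = (\<Sum>x\<in>Poly_Mapping.keys u. \<Sum>y\<in>Poly_Mapping.keys v. Poly_Mapping.single (x @ y) (Poly_Mapping.lookup u x * Poly_Mapping.lookup v y))"

definition lcomp :: "'b lmap \<Rightarrow> 'b lmap \<Rightarrow> 'b lmap" where
  "lcomp g f = (\<lambda>w. lapp g (f w))"

definition lid :: "'b lmap" where
  "lid = (\<lambda>w. Poly_Mapping.single w 1)"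

definition ltens :: "nat \<Rightarrow> 'b lmap \<Rightarrow> 'b lmap \<Rightarrow> 'b lmap" where
  "ltens m f g = (\<lambda>w. tmul (f (take m w)) (g (drop m w)))"

definition is_map :: "nat \<Rightarrow> nat \<Rightarrow> 'b lmap \<Rightarrow> bool" where
  "is_map m n f \<longleftrightarrow> (\<forall>w. length w = m \<longrightarrow> (\<forall>x\<in>Poly_Mapping.keys (f w). length x = n))"

definition map_eq :: "nat \<Rightarrow> 'b lmap \<Rightarrow> 'b lmap \<Rightarrow> bool" where
  "map_eq m f g \<longleftrightarrow> (\<forall>w. length w = m \<longrightarrow> f w = g w)"

definition braid_eq :: "'b lmap \<Rightarrow> bool" where
  "braid_eq \<beta> \<longleftrightarrow>
     map_eq 3 (lcomp (ltens 2 \<beta> lid) (lcomp (ltens 1 lid \<beta>) (ltens 2 \<beta> lid)))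
              (lcomp (ltens 1 lid \<beta>) (lcomp (ltens 2 \<beta> lid) (ltens 1 lid \<beta>)))"

definition braiding :: "'b lmap \<Rightarrow> bool" where
  "braiding \<beta> \<longleftrightarrow> is_map 2 2 \<beta> \<and>
     (\<exists>\<gamma>. is_map 2 2 \<gamma> \<and> map_eq 2 (lcomp \<beta> \<gamma>) lid \<and> map_eq 2 (lcomp \<gamma> \<beta>) lid) \<and>
     braid_eq \<beta>"

fun beta1 :: "'b lmap \<Rightarrow> nat \<Rightarrow> 'b lmap" where
  "beta1 \<beta> 0 = lid"
| "beta1 \<beta> (Suc m) = lcomp (ltens 1 lid (beta1 \<beta> m)) (ltens 2 \<beta> lid)"

(* \<beta>_{n,m}; \<beta>_{0,m} is the identity (this is forced by the recursion for n = 0) *)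
fun betanm :: "'b lmap \<Rightarrow> nat \<Rightarrow> nat \<Rightarrow> 'b lmap" where
  "betanm \<beta> 0 m = lid"
| "betanm \<beta> (Suc 0) m = beta1 \<beta> m"
| "betanm \<beta> (Suc (Suc n)) m =
     lcomp (ltens (Suc n + m) (betanm \<beta> (Suc n) m) lid) (ltens (Suc n) lid (beta1 \<beta> m))"

definition beta_inv :: "'b lmap \<Rightarrow> nat \<Rightarrow> nat \<Rightarrow> 'b lmap \<Rightarrow> bool" where
  "beta_inv \<beta> m n f \<longleftrightarrow>
     map_eq (Suc m) (lcomp (ltens m f lid) (betanm \<beta> 1 m)) (lcomp (betanm \<beta> 1 n) (ltens 1 lid f))"

definition beta_inv_inv :: "'b lmap \<Rightarrow> nat \<Rightarrow> nat \<Rightarrow> 'b lmap \<Rightarrow> bool" where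
  "beta_inv_inv \<beta> m n f \<longleftrightarrow>
     map_eq (Suc m) (lcomp (ltens 1 lid f) (betanm \<beta> m 1)) (lcomp (betanm \<beta> n 1) (ltens m f lid))"

definition beta_compat :: "'b lmap \<Rightarrow> nat \<Rightarrow> nat \<Rightarrow> 'b lmap \<Rightarrow> bool" where
  "beta_compat \<beta> m n f \<longleftrightarrow> beta_inv \<beta> m n f \<and> beta_inv_inv \<beta> m n f"

definition Lam :: "'b lmap \<Rightarrow> 'b lmap \<Rightarrow> 'b lmap" where
  "Lam \<beta> \<Delta> = lcomp (ltens 3 (ltens 1 lid \<beta>) lid) (ltens 1 \<Delta> \<Delta>)"

(* braided bialgebra (H, \<Delta>, \<delta>, \<mu>, 1, \<beta>); the unit 1 : C \<rightarrow> H is the map u *)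
definition braided_bialgebra ::
  "'b lmap \<Rightarrow> 'b lmap \<Rightarrow> 'b lmap \<Rightarrow> 'b lmap \<Rightarrow> 'b lmap \<Rightarrow> bool" where
  "braided_bialgebra \<Delta> \<delta> \<mu> u \<beta> \<longleftrightarrow>
     braiding \<beta> \<and>
     is_map 1 2 \<Delta> \<and> is_map 1 0 \<delta> \<and> is_map 2 1 \<mu> \<and> is_map 0 1 u \<and>
     \<comment> \<open>unital associative algebra\<close>
     map_eq 3 (lcomp \<mu> (ltens 2 \<mu> lid)) (lcomp \<mu> (ltens 1 lid \<mu>)) \<and>
     map_eq 1 (lcomp \<mu> (ltens 0 u lid)) lid \<and>
     map_eq 1 (lcomp \<mu> (ltens 1 lid u)) lid \<and>
     \<comment> \<open>coassociative counital coalgebra\<close>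
     map_eq 1 (lcomp (ltens 1 \<Delta> lid) \<Delta>) (lcomp (ltens 1 lid \<Delta>) \<Delta>) \<and>
     map_eq 1 (lcomp (ltens 1 \<delta> lid) \<Delta>) lid \<and>
     map_eq 1 (lcomp (ltens 1 lid \<delta>) \<Delta>) lid \<and>
     \<comment> \<open>\<beta>-compatibility of the structure maps\<close>
     beta_compat \<beta> 2 1 \<mu> \<and> beta_compat \<beta> 0 1 u \<and>
     beta_compat \<beta> 1 2 \<Delta> \<and> beta_compat \<beta> 1 0 \<delta> \<and>
     \<comment> \<open>compatibility of product and coproduct\<close>
     map_eq 2 (lcomp \<Delta> \<mu>) (lcomp (ltens 2 \<mu> \<mu>) (Lam \<beta> \<Delta>)) \<and>
     map_eq 0 (lcomp \<Delta> u) (ltens 0 u u) \<and>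
     map_eq 2 (lcomp \<delta> \<mu>) (ltens 1 \<delta> \<delta>) \<and>
     map_eq 0 (lcomp \<delta> u) lid"

definition braided_hopf ::
  "'b lmap \<Rightarrow> 'b lmap \<Rightarrow> 'b lmap \<Rightarrow> 'b lmap \<Rightarrow> 'b lmap \<Rightarrow> 'b lmap \<Rightarrow> bool" where
  "braided_hopf \<Delta> \<delta> \<mu> u S \<beta> \<longleftrightarrow>
     braided_bialgebra \<Delta> \<delta> \<mu> u \<beta> \<and> is_map 1 1 S \<and>
     map_eq 1 (lcomp \<mu> (lcomp (ltens 1 S lid) \<Delta>)) (lcomp u \<delta>) \<and>
     map_eq 1 (lcomp \<mu> (lcomp (ltens 1 lid S) \<Delta>)) (lcomp u \<delta>)"

end

theory Submission
  imports Defs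
begin

(*
  Let K~ = K (S \<otimes> id) \<Delta>.  The proof follows the paper and is a computation with string
  diagrams.  Two identities carry the argument:

   (1) the antipode is braided anti-comultiplicative, \<Delta> S = \<beta> (S \<otimes> S) \<Delta>.  Both sides are
       inverses of \<Delta> in the convolution algebra Hom(H, H \<otimes> H), where H \<otimes> H carries the
       braided product (\<mu> \<otimes> \<mu>)(id \<otimes> \<beta> \<otimes> id);
   (2) with (1), the hypothesis K \<star> \<mu> = \<mu> \<star> K and the \<beta>-invariance of K give
       S(h\<^sub>1) K~(h\<^sub>2) h\<^sub>3 = K~(h) 1; multiplying by h\<^sub>1 from the left yields
       K~(h\<^sub>1) h\<^sub>2 = h\<^sub>1 K~(h\<^sub>2), which is the theorem.
*)

section \<open>Linear algebra of the tensor model\<close>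

definition smult :: "complex \<Rightarrow> 'b tens \<Rightarrow> 'b tens" where
  "smult c p = Poly_Mapping.map (\<lambda>z. c * z) p"

lemma lookup_smult[simp]: "Poly_Mapping.lookup (smult c p) k = c * Poly_Mapping.lookup p k"
  by (simp add: smult_def Poly_Mapping.map.rep_eq when_def)

lemma smult_add_left: "smult (a + b) p = smult a p + smult b p"
  by (rule poly_mapping_eqI) (simp add: lookup_add algebra_simps)

lemma smult_zero_left[simp]: "smult 0 p = 0"
  by (rule poly_mapping_eqI) simp

lemma smult_one[simp]: "smult 1 p = p"
  by (rule poly_mapping_eqI) simp

lemma smult_smult[simp]: "smult a (smult b p) = smult (a * b) p"
  by (rule poly_mapping_eqI) simp

lemma smult_single[simp]: "smult c (Poly_Mapping.single w a) = Poly_Mapping.single w (c * a)"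
  by (rule poly_mapping_eqI) (simp add: lookup_single when_def)

lemma smult_sum: "smult c (\<Sum>i\<in>I. g i) = (\<Sum>i\<in>I. smult c (g i))"
  by (rule poly_mapping_eqI) (simp add: lookup_sum sum_distrib_left)

lemma keys_smult: "Poly_Mapping.keys (smult c p) \<subseteq> Poly_Mapping.keys p"
  by (auto simp: in_keys_iff)

lemma tensor_expansion: "v = (\<Sum>w\<in>Poly_Mapping.keys v. Poly_Mapping.single w (Poly_Mapping.lookup v w))"
proof (rule poly_mapping_eqI)
  fix k
  show "Poly_Mapping.lookup v k
      = Poly_Mapping.lookup (\<Sum>w\<in>Poly_Mapping.keys v. Poly_Mapping.single w (Poly_Mapping.lookup v w)) k"
    by (simp add: lookup_sum lookup_single when_def in_keys_iff)
qed

lemma lapp_alt: "lapp f v = (\<Sum>w\<in>Poly_Mapping.keys v. smult (Poly_Mapping.lookup v w) (f w))"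
  by (simp add: lapp_def smult_def)

lemma lapp_superset:
  assumes "finite A" "Poly_Mapping.keys v \<subseteq> A"
  shows "lapp f v = (\<Sum>w\<in>A. smult (Poly_Mapping.lookup v w) (f w))"
  unfolding lapp_alt
  by (rule sum.mono_neutral_left) (use assms in \<open>auto simp: in_keys_iff\<close>)

lemma lapp_add: "lapp f (v1 + v2) = lapp f v1 + lapp f v2"
proof -
  let ?A = "Poly_Mapping.keys v1 \<union> Poly_Mapping.keys v2"
  have "Poly_Mapping.keys (v1 + v2) \<subseteq> ?A" by (rule keys_add)
  then have "lapp f (v1 + v2) = (\<Sum>w\<in>?A. smult (Poly_Mapping.lookup (v1+v2) w) (f w))"
    by (intro lapp_superset) auto
  also have "\<dots> = (\<Sum>w\<in>?A. smult (Poly_Mapping.lookup v1 w) (f w))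
                 + (\<Sum>w\<in>?A. smult (Poly_Mapping.lookup v2 w) (f w))"
    by (simp add: lookup_add smult_add_left sum.distrib)
  also have "\<dots> = lapp f v1 + lapp f v2"
    by (subst (1 2) lapp_superset[where A="?A"]) auto
  finally show ?thesis .
qed

lemma lapp_zero[simp]: "lapp f 0 = 0"
  by (simp add: lapp_alt)

lemma lapp_smult: "lapp f (smult c v) = smult c (lapp f v)"
proof -
  have "lapp f (smult c v) = (\<Sum>w\<in>Poly_Mapping.keys v. smult (Poly_Mapping.lookup (smult c v) w) (f w))"
    by (intro lapp_superset keys_smult) simp
  then show ?thesis by (simp add: lapp_alt smult_sum)
qed

lemma lapp_sum: "lapp f (\<Sum>i\<in>I. g i) = (\<Sum>i\<in>I. lapp f (g i))"
  by (induction I rule: infinite_finite_induct) (auto simp: lapp_add)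

lemma lapp_single[simp]: "lapp f (Poly_Mapping.single w c) = smult c (f w)"
  by (subst lapp_superset[where A="{w}"]) auto

lemma lapp_lcomp: "lapp (lcomp g f) v = lapp g (lapp f v)"
proof -
  have "lapp g (lapp f v) = lapp g (\<Sum>w\<in>Poly_Mapping.keys v. smult (Poly_Mapping.lookup v w) (f w))"
    by (simp only: lapp_alt[of f v])
  also have "\<dots> = (\<Sum>w\<in>Poly_Mapping.keys v. smult (Poly_Mapping.lookup v w) (lapp g (f w)))"
    by (simp only: lapp_sum lapp_smult)
  moreover have "lapp (lcomp g f) v = (\<Sum>w\<in>Poly_Mapping.keys v. smult (Poly_Mapping.lookup v w) (lapp g (f w)))"
    unfolding lapp_alt[of "lcomp g f" v] by (simp add: lcomp_def)
  ultimately show ?thesis by simp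
qed

lemma lcomp_assoc: "lcomp h (lcomp g f) = lcomp (lcomp h g) f"
  by (rule ext) (simp only: lcomp_def lapp_lcomp[unfolded lcomp_def])

lemma lapp_lid[simp]: "lapp lid v = v"
  by (simp add: lapp_alt lid_def) (rule tensor_expansion[symmetric])

lemma lcomp_lid_left[simp]: "lcomp lid f = f"
  by (rule ext) (simp add: lcomp_def)

lemma lcomp_lid_right[simp]: "lcomp f lid = f"
  by (rule ext) (simp add: lcomp_def lid_def)

lemma tmul_superset:
  assumes "finite A" "Poly_Mapping.keys u \<subseteq> A" "finite B" "Poly_Mapping.keys v \<subseteq> B"
  shows "tmul u v = (\<Sum>x\<in>A. \<Sum>y\<in>B.
           Poly_Mapping.single (x @ y) (Poly_Mapping.lookup u x * Poly_Mapping.lookup v y))"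
proof -
  have "tmul u v = (\<Sum>x\<in>A. \<Sum>y\<in>Poly_Mapping.keys v.
           Poly_Mapping.single (x @ y) (Poly_Mapping.lookup u x * Poly_Mapping.lookup v y))"
    unfolding tmul_def
    by (rule sum.mono_neutral_left) (use assms in \<open>auto simp: in_keys_iff\<close>)
  show ?thesis
    unfolding \<open>tmul u v = _\<close>
    by (rule sum.cong[OF refl], rule sum.mono_neutral_left) (use assms in \<open>auto simp: in_keys_iff\<close>)
qed

lemma tmul_single_single[simp]:
  "tmul (Poly_Mapping.single x a) (Poly_Mapping.single y b) = Poly_Mapping.single (x @ y) (a * b)"
  by (subst tmul_superset[where A="{x}" and B="{y}"]) auto

lemma tmul_add_left: "tmul (u1 + u2) v = tmul u1 v + tmul u2 v"
proof -
  let ?A = "Poly_Mapping.keys u1 \<union> Poly_Mapping.keys u2"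
  have k: "Poly_Mapping.keys (u1 + u2) \<subseteq> ?A" by (rule keys_add)
  show ?thesis
    apply (subst (1 2 3) tmul_superset[where A="?A" and B="Poly_Mapping.keys v"])
    using k by (auto simp: lookup_add distrib_right single_add sum.distrib)
qed

lemma tmul_add_right: "tmul u (v1 + v2) = tmul u v1 + tmul u v2"
proof -
  let ?B = "Poly_Mapping.keys v1 \<union> Poly_Mapping.keys v2"
  have k: "Poly_Mapping.keys (v1 + v2) \<subseteq> ?B" by (rule keys_add)
  show ?thesis
    apply (subst (1 2 3) tmul_superset[where B="?B" and A="Poly_Mapping.keys u"])
    using k by (auto simp: lookup_add distrib_left single_add sum.distrib)
qed

lemma tmul_zero_left[simp]: "tmul 0 v = 0" by (simp add: tmul_def)

lemma tmul_zero_right[simp]: "tmul u 0 = 0" by (simp add: tmul_def)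

lemma tmul_sum_right: "tmul u (\<Sum>i\<in>I. g i) = (\<Sum>i\<in>I. tmul u (g i))"
  by (induction I rule: infinite_finite_induct) (auto simp: tmul_add_right)

lemma tmul_smult_left: "tmul (smult c u) v = smult c (tmul u v)"
  apply (subst (1 2) tmul_superset[where A="Poly_Mapping.keys u" and B="Poly_Mapping.keys v"])
  using keys_smult by (auto simp: smult_sum mult.assoc)

lemma tmul_smult_right: "tmul u (smult c v) = smult c (tmul u v)"
  apply (subst (1 2) tmul_superset[where A="Poly_Mapping.keys u" and B="Poly_Mapping.keys v"])
  using keys_smult by (auto simp: smult_sum mult.assoc mult.left_commute)

lemma tmul_nil_left[simp]: "tmul (Poly_Mapping.single [] 1) v = v"
  by (subst tmul_superset[where A="{[]}" and B="Poly_Mapping.keys v"]) (auto intro: tensor_expansion[symmetric])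

text \<open>\<open>ctx p v s\<close> is the tensor \<open>p \<otimes> v \<otimes> s\<close> for basis words \<open>p\<close>, \<open>s\<close>; it is how a
  layer \<open>id \<otimes> f \<otimes> id\<close> acts on a basis word.\<close>

definition ctx :: "'b list \<Rightarrow> 'b tens \<Rightarrow> 'b list \<Rightarrow> 'b tens" where
  "ctx p v s = tmul (Poly_Mapping.single p 1) (tmul v (Poly_Mapping.single s 1))"

lemma ctx_expand: "ctx p v s = (\<Sum>y\<in>Poly_Mapping.keys v. Poly_Mapping.single (p @ y @ s) (Poly_Mapping.lookup v y))"
proof -
  have "tmul v (Poly_Mapping.single s 1)
      = (\<Sum>y\<in>Poly_Mapping.keys v. Poly_Mapping.single (y @ s) (Poly_Mapping.lookup v y))"
    by (simp add: tmul_def)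
  then show ?thesis by (simp add: ctx_def tmul_sum_right)
qed

lemma ctx_single[simp]: "ctx p (Poly_Mapping.single x c) s = Poly_Mapping.single (p @ x @ s) c"
  by (simp add: ctx_def)

lemma ctx_add: "ctx p (v1 + v2) s = ctx p v1 s + ctx p v2 s"
  by (simp add: ctx_def tmul_add_left tmul_add_right)

lemma ctx_zero[simp]: "ctx p 0 s = 0"
  by (simp add: ctx_def)

lemma ctx_sum: "ctx p (\<Sum>i\<in>I. g i) s = (\<Sum>i\<in>I. ctx p (g i) s)"
  by (induction I rule: infinite_finite_induct) (auto simp: ctx_add)

lemma ctx_smult: "ctx p (smult c v) s = smult c (ctx p v s)"
  by (simp add: ctx_def tmul_smult_left tmul_smult_right)

lemma lapp_ctx: "lapp h (ctx p v s) = (\<Sum>y\<in>Poly_Mapping.keys v. smult (Poly_Mapping.lookup v y) (h (p @ y @ s)))"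
  by (simp add: ctx_expand lapp_sum)

lemma ctx_lapp: "ctx p (lapp f v) s = (\<Sum>w\<in>Poly_Mapping.keys v. smult (Poly_Mapping.lookup v w) (ctx p (f w) s))"
  by (simp add: lapp_alt ctx_sum ctx_smult)

lemma ctx_nil: "ctx [] v [] = v"
  by (simp add: ctx_expand) (rule tensor_expansion[symmetric])

lemma ctx_ctx: "ctx p (ctx a v b) r = ctx (p @ a) v (b @ r)"
  by (simp add: ctx_expand[of a v b] ctx_sum) (simp add: ctx_expand)

lemma keys_ctx: "Poly_Mapping.keys (ctx p v s) \<subseteq> {p @ y @ s | y. y \<in> Poly_Mapping.keys v}"
proof -
  have "Poly_Mapping.keys (ctx p v s) \<subseteq>
      (\<Union>y\<in>Poly_Mapping.keys v. Poly_Mapping.keys (Poly_Mapping.single (p @ y @ s) (Poly_Mapping.lookup v y)))"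
    unfolding ctx_expand by (rule keys_sum)
  also have "\<dots> \<subseteq> {p @ y @ s | y. y \<in> Poly_Mapping.keys v}" by auto
  finally show ?thesis .
qed

lemma keys_lapp: "Poly_Mapping.keys (lapp g v) \<subseteq> (\<Union>w\<in>Poly_Mapping.keys v. Poly_Mapping.keys (g w))"
proof -
  have "Poly_Mapping.keys (lapp g v) \<subseteq>
      (\<Union>w\<in>Poly_Mapping.keys v. Poly_Mapping.keys (smult (Poly_Mapping.lookup v w) (g w)))"
    unfolding lapp_alt by (rule keys_sum)
  also have "\<dots> \<subseteq> (\<Union>w\<in>Poly_Mapping.keys v. Poly_Mapping.keys (g w))"
    using keys_smult by fastforce
  finally show ?thesis .
qed

text \<open>\<open>placed i k f\<close> is the layer \<open>id\<^bsup>\<otimes>i\<^esup> \<otimes> f \<otimes> id \<otimes> \<dots>\<close>: the map \<open>f\<close> with \<open>k\<close> inputs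
  acting on the wires \<open>i, \<dots>, i + k - 1\<close>.\<close>

definition placed :: "nat \<Rightarrow> nat \<Rightarrow> 'b lmap \<Rightarrow> 'b lmap" where
  "placed i k f = (\<lambda>w. ctx (take i w) (f (take k (drop i w))) (drop (i + k) w))"

lemma placed_app: "length a = i \<Longrightarrow> length b = k \<Longrightarrow> placed i k f (a @ b @ c) = ctx a (f b) c"
  by (simp add: placed_def)

lemma split3:
  assumes "i + k \<le> length w"
  obtains a b c where "w = a @ b @ c" "length a = i" "length b = k"
proof
  show "w = take i w @ take k (drop i w) @ drop (i + k) w"
    by (metis append.assoc append_take_drop_id drop_drop add.commute take_add)
qed (use assms in auto)

lemma map_eq_refl[simp]: "map_eq n f f"
  by (simp add: map_eq_def)

lemma map_eq_sym: "map_eq n f g \<Longrightarrow> map_eq n g f"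
  by (simp add: map_eq_def)

lemma map_eq_trans[trans]: "map_eq n f g \<Longrightarrow> map_eq n g h \<Longrightarrow> map_eq n f h"
  by (simp add: map_eq_def)

lemma placed_cong: "map_eq k f g \<Longrightarrow> i + k \<le> n \<Longrightarrow> map_eq n (placed i k f) (placed i k g)"
  by (auto simp: map_eq_def placed_def)

lemma is_map_placed:
  assumes f: "is_map k k' f" and le: "i + k \<le> n" and m: "m = n + k' - k"
  shows "is_map n m (placed i k f)"
  unfolding is_map_def
proof (intro allI impI ballI)
  fix w x
  assume w: "length w = n" and x: "x \<in> Poly_Mapping.keys (placed i k f w)"
  from le w obtain a b c where abc: "w = a @ b @ c" "length a = i" "length b = k" by (metis split3)
  with x have "x \<in> Poly_Mapping.keys (ctx a (f b) c)" by (simp add: placed_app)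
  then obtain y where "x = a @ y @ c" "y \<in> Poly_Mapping.keys (f b)" using keys_ctx by blast
  with f abc w m show "length x = m" by (auto simp: is_map_def)
qed

lemma is_map_lcomp: "is_map a b f \<Longrightarrow> is_map b c g \<Longrightarrow> is_map a c (lcomp g f)"
  unfolding is_map_def lcomp_def using keys_lapp by blast

lemma is_map_lid: "is_map n n lid"
  by (simp add: is_map_def lid_def)

lemma lcomp_cong_right: "map_eq m g g' \<Longrightarrow> is_map n m f \<Longrightarrow> map_eq n (lcomp g f) (lcomp g' f)"
  unfolding map_eq_def lcomp_def is_map_def lapp_alt by (auto intro!: sum.cong)

lemma lcomp_cong_left: "map_eq n f f' \<Longrightarrow> map_eq n (lcomp g f) (lcomp g f')"
  unfolding map_eq_def lcomp_def by auto

lemma lcomp_cong: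
  "map_eq n f f' \<Longrightarrow> map_eq m g g' \<Longrightarrow> is_map n m f' \<Longrightarrow> map_eq n (lcomp g f) (lcomp g' f')"
  by (metis lcomp_cong_left lcomp_cong_right map_eq_trans)

lemma lcomp_cong':
  "map_eq n f f' \<Longrightarrow> map_eq m g g' \<Longrightarrow> is_map n m f \<Longrightarrow> map_eq n (lcomp g f) (lcomp g' f')"
  by (metis lcomp_cong_left lcomp_cong_right map_eq_trans)

lemma placed_lcomp:
  assumes f: "is_map k m f" and le: "i + k \<le> n"
  shows "map_eq n (placed i k (lcomp g f)) (lcomp (placed i m g) (placed i k f))"
  unfolding map_eq_def
proof (intro allI impI)
  fix w :: "'a list" assume "length w = n"
  with le obtain a b c where abc: "w = a @ b @ c" "length a = i" "length b = k" by (metis split3)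
  have "placed i k (lcomp g f) w
      = (\<Sum>y\<in>Poly_Mapping.keys (f b). smult (Poly_Mapping.lookup (f b) y) (ctx a (g y) c))"
    by (simp add: abc placed_app lcomp_def ctx_lapp)
  also have "\<dots> = (\<Sum>y\<in>Poly_Mapping.keys (f b).
                    smult (Poly_Mapping.lookup (f b) y) (placed i m g (a @ y @ c)))"
    using f abc by (intro sum.cong refl) (auto simp: is_map_def placed_app)
  also have "\<dots> = lcomp (placed i m g) (placed i k f) w"
    by (simp add: abc placed_app lcomp_def lapp_ctx)
  finally show "placed i k (lcomp g f) w = lcomp (placed i m g) (placed i k f) w" .
qed

lemma placed_placed:
  assumes "j + l \<le> k" "i + k \<le> n"
  shows "map_eq n (placed i k (placed j l f)) (placed (i + j) l f)"
  unfolding map_eq_def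
proof (intro allI impI)
  fix w :: "'a list" assume "length w = n"
  with assms obtain a b c where abc: "w = a @ b @ c" "length a = i" "length b = k"
    by (metis split3)
  with assms obtain b1 b2 b3 where b: "b = b1 @ b2 @ b3" "length b1 = j" "length b2 = l"
    by (metis split3)
  have "placed j l f b = ctx b1 (f b2) b3"
    by (simp only: b(1)) (rule placed_app[OF b(2,3)])
  moreover have "placed i k (placed j l f) w = ctx a (placed j l f b) c"
    by (simp only: abc(1)) (rule placed_app[OF abc(2,3)])
  ultimately have "placed i k (placed j l f) w = ctx (a @ b1) (f b2) (b3 @ c)"
    by (simp add: ctx_ctx)
  also have "\<dots> = placed (i + j) l f ((a @ b1) @ b2 @ (b3 @ c))"
    using abc b by (intro placed_app[symmetric]) auto
  finally show "placed i k (placed j l f) w = placed (i + j) l f w"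
    using abc b by simp
qed

lemma placed_lid[simp]: "placed i k lid = lid"
proof (rule ext)
  fix w :: "'a list"
  have "take i w @ take k (drop i w) @ drop (i + k) w = w"
    by (metis append.assoc append_take_drop_id drop_drop add.commute take_add)
  then show "placed i k lid w = lid w"
    by (simp add: placed_def lid_def)
qed

lemma placed_0: "map_eq k (placed 0 k f) f"
  by (simp add: map_eq_def placed_def ctx_nil)

lemma placed_0_sym: "map_eq k f (placed 0 k f)"
  by (rule map_eq_sym[OF placed_0])

text \<open>Here \<open>g\<close> lies \<open>d\<close>
  wires to the right of \<open>f\<close>; its position is measured before or after \<open>f\<close> is applied.\<close>

lemma placed_interchange:
  assumes f: "is_map k k' f" and g: "is_map l l' g" and n: "i + k + d + l \<le> n"
  shows "map_eq n (lcomp (placed (i + k' + d) l g) (placed i k f))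
                  (lcomp (placed i k f) (placed (i + k + d) l g))"
  unfolding map_eq_def
proof (intro allI impI)
  fix w :: "'a list" assume w: "length w = n"
  from n w obtain a b r where abr: "w = a @ b @ r" "length a = i" "length b = k"
    by (metis split3 add.assoc le_add1 order_trans)
  from abr w n have "d + l \<le> length r" by simp
  then obtain r1 z r2 where r: "r = r1 @ z @ r2" "length r1 = d" "length z = l"
    by (metis split3 add_0)
  define fb gz where "fb = f b" and "gz = g z"
  text \<open>Both sides send \<open>w = a b r\<^sub>1 z r\<^sub>2\<close> to \<open>a \<otimes> f(b) \<otimes> r\<^sub>1 \<otimes> g(z) \<otimes> r\<^sub>2\<close>.\<close>
  let ?T = "\<lambda>y q. Poly_Mapping.single (a @ y @ r1 @ q @ r2)
                   (Poly_Mapping.lookup fb y * Poly_Mapping.lookup gz q)"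
  have "lcomp (placed (i + k' + d) l g) (placed i k f) w
      = (\<Sum>y\<in>Poly_Mapping.keys fb. smult (Poly_Mapping.lookup fb y) (ctx (a @ y @ r1) gz r2))"
  proof -
    have "placed (i + k' + d) l g ((a @ y @ r1) @ z @ r2) = ctx (a @ y @ r1) gz r2"
      if "y \<in> Poly_Mapping.keys fb" for y
      unfolding gz_def using that f abr r by (intro placed_app) (auto simp: is_map_def fb_def)
    then show ?thesis
      by (simp add: lcomp_def abr r placed_app lapp_ctx fb_def[symmetric])
  qed
  also have "\<dots> = (\<Sum>y\<in>Poly_Mapping.keys fb. \<Sum>q\<in>Poly_Mapping.keys gz. ?T y q)"
    by (simp add: ctx_expand smult_sum)
  also have "\<dots> = (\<Sum>q\<in>Poly_Mapping.keys gz. smult (Poly_Mapping.lookup gz q) (ctx a fb (r1 @ q @ r2)))"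
    by (simp add: ctx_expand smult_sum mult.commute) (rule sum.swap)
  also have "\<dots> = lcomp (placed i k f) (placed (i + k + d) l g) w"
  proof -
    have "placed (i + k + d) l g w = ctx (a @ b @ r1) gz r2"
      using abr r placed_app[of "a @ b @ r1" "i + k + d" z l g r2] by (simp add: gz_def)
    then show ?thesis
      using abr by (simp add: lcomp_def lapp_ctx placed_app fb_def)
  qed
  finally show "lcomp (placed (i + k' + d) l g) (placed i k f) w
              = lcomp (placed i k f) (placed (i + k + d) l g) w" .
qed

lemma ltens_lid_right: "ltens m f lid = placed 0 m f"
  by (rule ext) (simp add: ltens_def placed_def lid_def ctx_def)

lemma ltens_lid_lid: "ltens m lid lid = lid"
  by (rule ext) (simp add: ltens_def lid_def)

lemma ltens_split:
  assumes "m + c = n"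
  shows "map_eq n (ltens m f g) (lcomp (placed 0 m f) (placed m c g))"
  unfolding map_eq_def
proof (intro allI impI)
  fix w :: "'a list" assume w: "length w = n"
  with assms obtain a b e where abe: "w = a @ b @ e" "length a = m" "length b = c"
    by (metis split3 order_refl)
  with w assms have e: "e = []" by auto
  have "lcomp (placed 0 m f) (placed m c g) w = lapp (placed 0 m f) (ctx a (g b) [])"
    using abe e placed_app[of a m b c g "[]"] by (simp add: lcomp_def)
  also have "\<dots> = (\<Sum>y\<in>Poly_Mapping.keys (g b). smult (Poly_Mapping.lookup (g b) y) (ctx [] (f a) y))"
    using abe by (simp add: lapp_ctx placed_app[where a="[]", simplified])
  also have "\<dots> = tmul (f a) (g b)"
    by (simp add: ctx_expand smult_sum tmul_def mult.commute) (rule sum.swap)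
  finally show "ltens m f g w = lcomp (placed 0 m f) (placed m c g) w"
    using abe e by (simp add: ltens_def)
qed

lemma ltens_lid_left: "m + c = n \<Longrightarrow> map_eq n (ltens m lid g) (placed m c g)"
  using ltens_split[of m c n lid g] by simp

section \<open>String diagrams\<close>

text \<open>A layer \<open>(i, k, k', f)\<close> is the map \<open>f : H\<^bsup>\<otimes>k\<^esup> \<rightarrow> H\<^bsup>\<otimes>k'\<^esup>\<close> acting at wire \<open>i\<close>; a diagram is
  a list of layers, applied from the head of the list on.\<close>

type_synonym 'b layer = "nat \<times> nat \<times> nat \<times> 'b lmap"

fun diagram :: "'b layer list \<Rightarrow> 'b lmap" where
  "diagram [] = lid"
| "diagram ((i, k, k', f) # xs) = lcomp (diagram xs) (placed i k f)"

fun wires :: "nat \<Rightarrow> 'b layer list \<Rightarrow> nat" where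
  "wires n [] = n"
| "wires n ((i, k, k', f) # xs) = wires (n + k' - k) xs"

fun valid :: "nat \<Rightarrow> 'b layer list \<Rightarrow> bool" where
  "valid n [] = True"
| "valid n ((i, k, k', f) # xs) = (is_map k k' f \<and> i + k \<le> n \<and> valid (n + k' - k) xs)"

definition shift :: "nat \<Rightarrow> 'b layer list \<Rightarrow> 'b layer list" where
  "shift i xs = map (\<lambda>(j, a, b, f). (i + j, a, b, f)) xs"

lemma shift_simps[simp]:
  "shift i [] = []" "shift i ((j, a, b, f) # xs) = (i + j, a, b, f) # shift i xs"
  by (simp_all add: shift_def)

lemma valid_is_map: "valid n xs \<Longrightarrow> is_map n (wires n xs) (diagram xs)"
proof (induction xs arbitrary: n)
  case Nil then show ?case by (simp add: is_map_lid)
next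
  case (Cons x xs)
  then show ?case
    by (cases x) (auto intro: is_map_lcomp is_map_placed)
qed

lemma diagram_append: "diagram (xs @ ys) = lcomp (diagram ys) (diagram xs)"
  by (induction xs rule: diagram.induct) (simp_all add: lcomp_assoc)

lemma valid_append: "valid n (xs @ ys) = (valid n xs \<and> valid (wires n xs) ys)"
  by (induction n xs rule: valid.induct) auto

lemma map_eq_in_context:
  assumes "valid n pre" "map_eq (wires n pre) (diagram a) (diagram b)"
  shows "map_eq n (diagram (pre @ a @ post)) (diagram (pre @ b @ post))"
proof -
  have "map_eq n (lcomp (diagram a) (diagram pre)) (lcomp (diagram b) (diagram pre))"
    using assms valid_is_map by (blast intro: lcomp_cong_right)
  then have "map_eq n (lcomp (diagram post) (lcomp (diagram a) (diagram pre)))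
                      (lcomp (diagram post) (lcomp (diagram b) (diagram pre)))"
    by (rule lcomp_cong_left)
  then show ?thesis
    by (simp add: diagram_append lcomp_assoc)
qed

lemma diagram_shift:
  assumes "valid k xs" "i + k \<le> n"
  shows "map_eq n (diagram (shift i xs)) (placed i k (diagram xs))"
  using assms
proof (induction xs arbitrary: k n)
  case Nil then show ?case by simp
next
  case (Cons x xs)
  obtain j a b f where x: "x = (j, a, b, f)" by (cases x) auto
  from Cons.prems x have f: "is_map a b f" and ja: "j + a \<le> k" and xs: "valid (k + b - a) xs"
    by auto
  have "map_eq n (placed i k (diagram (x # xs)))
          (lcomp (placed i (k + b - a) (diagram xs)) (placed i k (placed j a f)))"
    unfolding x diagram.simps
    using Cons.prems(2) by (intro placed_lcomp is_map_placed[OF f ja]) auto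
  also have "map_eq n \<dots> (lcomp (placed i (k + b - a) (diagram xs)) (placed (i + j) a f))"
    using ja Cons.prems by (intro lcomp_cong_left placed_placed) auto
  also have "map_eq n \<dots> (lcomp (diagram (shift i xs)) (placed (i + j) a f))"
  proof (rule lcomp_cong_right)
    show "map_eq (n + b - a) (placed i (k + b - a) (diagram xs)) (diagram (shift i xs))"
      by (rule map_eq_sym, rule Cons.IH[OF xs]) (use Cons.prems ja in arith)
    show "is_map n (n + b - a) (placed (i + j) a f)"
      using f ja Cons.prems by (intro is_map_placed) auto
  qed
  finally show ?case
    unfolding x by (simp only: shift_simps diagram.simps) (rule map_eq_sym)
qed

text \<open>Rewriting with an equation of diagrams \<open>a = b\<close> on \<open>k\<close> wires: the occurrence of \<open>a\<close>,
  shifted by \<open>i\<close> wires, starts at position \<open>p\<close> of the diagram.  All side conditions are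
  decidable by simplification for concrete diagrams.\<close>

lemma rewrite_at:
  assumes ab: "map_eq k (diagram a) (diagram b)" and "valid k a" "valid k b"
    and xs: "valid n xs" "i + k \<le> wires n (take p xs)"
    "take (length a) (drop p xs) = shift i a"
    and ys: "ys = take p xs @ shift i b @ drop (p + length a) xs"
  shows "map_eq n (diagram xs) (diagram ys)"
proof -
  let ?pre = "take p xs" and ?post = "drop (p + length a) xs"
  have "xs = ?pre @ shift i a @ ?post"
    using xs(3) by (metis append_take_drop_id drop_drop add.commute)
  moreover have "valid n ?pre"
    using xs(1) valid_append by (metis append_take_drop_id)
  moreover have "map_eq (wires n ?pre) (diagram (shift i a)) (diagram (shift i b))"
  proof -
    have "map_eq (wires n ?pre) (diagram (shift i a)) (placed i k (diagram a))"
      using assms by (intro diagram_shift) auto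
    also have "map_eq (wires n ?pre) \<dots> (placed i k (diagram b))"
      using ab xs by (intro placed_cong) auto
    also have "map_eq (wires n ?pre) \<dots> (diagram (shift i b))"
      using assms by (intro map_eq_sym[OF diagram_shift]) auto
    finally show ?thesis .
  qed
  ultimately show ?thesis
    using ys map_eq_in_context by metis
qed

lemma rewrite_back_at:
  assumes "map_eq k (diagram b) (diagram a)" "valid k a" "valid k b"
    "valid n xs" "i + k \<le> wires n (take p xs)"
    "take (length a) (drop p xs) = shift i a"
    "ys = take p xs @ shift i b @ drop (p + length a) xs"
  shows "map_eq n (diagram xs) (diagram ys)"
  using rewrite_at[OF map_eq_sym] assms by blast

text \<open>Two adjacent layers \<open>x\<close>, \<open>y\<close> acting on disjoint wires may be replaced by \<open>y'\<close>, \<open>x'\<close>: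
  the same maps, with positions adjusted for the wires the first one consumes or creates.\<close>

fun commutes :: "'b layer \<Rightarrow> 'b layer \<Rightarrow> 'b layer \<Rightarrow> 'b layer \<Rightarrow> bool" where
  "commutes (i, k, k', f) (j, l, l', g) (j2, l2, l2', g2) (i2, k2, k2', f2) \<longleftrightarrow>
     (l2, l2', g2) = (l, l', g) \<and> (k2, k2', f2) = (k, k', f) \<and>
     (i + k' \<le> j \<and> j2 = j + k - k' \<and> i2 = i \<or> j + l \<le> i \<and> j2 = j \<and> i2 = i + l' - l)"

lemma interchange_pair:
  assumes "valid n [x, y]" "commutes x y y' x'"
  shows "map_eq n (diagram [x, y]) (diagram [y', x'])"
proof -
  obtain i k k' f j l l' g where xy: "x = (i, k, k', f)" "y = (j, l, l', g)"
    by (cases x, cases y) auto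
  from assms xy have f: "is_map k k' f" and g: "is_map l l' g"
    and ik: "i + k \<le> n" and jl: "j + l \<le> n + k' - k" by auto
  from assms xy consider
      d where "j = i + k' + d" "y' = (i + k + d, l, l', g)" "x' = x"
    | d where "i = j + l + d" "y' = y" "x' = (j + l' + d, k, k', f)"
    by (cases y', cases x') (auto dest: le_Suc_ex)
  then show ?thesis
  proof cases
    case 1
    then show ?thesis
      using xy placed_interchange[OF f g, of i d n] ik jl by auto
  next
    case 2
    then show ?thesis
      using xy map_eq_sym[OF placed_interchange[OF g f, of j d n]] ik jl by auto
  qed
qed

lemma interchange:
  assumes xs: "valid n xs" "Suc p < length xs"
    and c: "commutes (xs ! p) (xs ! Suc p) (ys ! p) (ys ! Suc p)"
    and ys: "ys = take p xs @ [ys ! p, ys ! Suc p] @ drop (Suc (Suc p)) xs"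
  shows "map_eq n (diagram xs) (diagram ys)"
proof -
  let ?pre = "take p xs"
  have split: "xs = ?pre @ [xs ! p, xs ! Suc p] @ drop (Suc (Suc p)) xs"
    using xs(2) by (simp add: Cons_nth_drop_Suc)
  then have "valid n ?pre" "valid (wires n ?pre) [xs ! p, xs ! Suc p]"
    using xs(1) valid_append by metis+
  then show ?thesis
    using map_eq_in_context interchange_pair[OF _ c] split ys by metis
qed

lemma betanm_1_1: "betanm \<beta> 1 1 = placed 0 2 \<beta>"
  by (simp add: One_nat_def ltens_lid_lid ltens_lid_right)

lemma beta1_1: "beta1 \<beta> 1 = placed 0 2 \<beta>"
  using betanm_1_1 by simp

lemma ltens_lid_beta1: "map_eq 3 (ltens 1 lid (beta1 \<beta> 1)) (placed 1 2 \<beta>)"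
proof -
  have "map_eq 3 (ltens 1 lid (placed 0 2 \<beta>)) (placed 1 2 (placed 0 2 \<beta>))"
    by (rule ltens_lid_left) simp
  also have "map_eq 3 \<dots> (placed 1 2 \<beta>)"
    using placed_placed[of 0 2 2 1 3 \<beta>] by simp
  finally show ?thesis
    unfolding beta1_1 .
qed

lemma betanm_1_2:
  assumes "is_map 2 2 \<beta>"
  shows "map_eq 3 (betanm \<beta> 1 2) (diagram [(0, 2, 2, \<beta>), (1, 2, 2, \<beta>)])"
proof -
  have "betanm \<beta> 1 2 = lcomp (ltens 1 lid (beta1 \<beta> 1)) (placed 0 2 \<beta>)"
    by (simp only: numeral_2_eq_2 One_nat_def beta1.simps betanm.simps ltens_lid_right)
  moreover have "map_eq 3 (lcomp (ltens 1 lid (beta1 \<beta> 1)) (placed 0 2 \<beta>))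
                           (lcomp (placed 1 2 \<beta>) (placed 0 2 \<beta>))"
    by (rule lcomp_cong[OF map_eq_refl ltens_lid_beta1 is_map_placed[OF assms]]) simp_all
  ultimately show ?thesis by simp
qed

lemma betanm_2_1:
  assumes "is_map 2 2 \<beta>"
  shows "map_eq 3 (betanm \<beta> 2 1) (diagram [(1, 2, 2, \<beta>), (0, 2, 2, \<beta>)])"
proof -
  have "betanm \<beta> 2 1 = lcomp (ltens 2 (betanm \<beta> 1 1) lid) (ltens 1 lid (beta1 \<beta> 1))"
    by (simp only: numeral_2_eq_2 One_nat_def beta1.simps betanm.simps) simp
  moreover have "map_eq 3 (ltens 2 (betanm \<beta> 1 1) lid) (placed 0 2 \<beta>)"
    unfolding betanm_1_1 ltens_lid_right using placed_placed[of 0 2 2 0 3 \<beta>] by simp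
  then have "map_eq 3 (lcomp (ltens 2 (betanm \<beta> 1 1) lid) (ltens 1 lid (beta1 \<beta> 1)))
                      (lcomp (placed 0 2 \<beta>) (placed 1 2 \<beta>))"
    by (rule lcomp_cong[OF ltens_lid_beta1 _ is_map_placed[OF assms]]) simp_all
  ultimately show ?thesis by simp
qed

lemma beta_inv_binary:
  assumes "is_map 2 2 \<beta>" "beta_inv \<beta> 2 n f"
  shows "map_eq 3 (diagram [(0, 2, 2, \<beta>), (1, 2, 2, \<beta>), (0, 2, n, f)])
                  (lcomp (betanm \<beta> 1 n) (placed 1 2 f))"
proof -
  have "map_eq 3 (diagram [(0, 2, 2, \<beta>), (1, 2, 2, \<beta>), (0, 2, n, f)])
                  (lcomp (ltens 2 f lid) (betanm \<beta> 1 2))"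
    using lcomp_cong_left[OF map_eq_sym[OF betanm_1_2[OF assms(1)]], of "ltens 2 f lid"]
    by (simp add: ltens_lid_right lcomp_assoc)
  also have "map_eq 3 \<dots> (lcomp (betanm \<beta> 1 n) (ltens 1 lid f))"
    using assms(2) by (simp add: beta_inv_def numeral_3_eq_3)
  also have "map_eq 3 \<dots> (lcomp (betanm \<beta> 1 n) (placed 1 2 f))"
    by (rule lcomp_cong_left, rule ltens_lid_left) simp
  finally show ?thesis .
qed

lemma beta_inv_inv_binary:
  assumes "is_map 2 2 \<beta>" "beta_inv_inv \<beta> 2 n f"
  shows "map_eq 3 (diagram [(1, 2, 2, \<beta>), (0, 2, 2, \<beta>), (1, 2, n, f)])
                  (lcomp (betanm \<beta> n 1) (placed 0 2 f))"
proof -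
  have "map_eq 3 (diagram [(1, 2, 2, \<beta>), (0, 2, 2, \<beta>), (1, 2, n, f)])
                  (lcomp (ltens 1 lid f) (betanm \<beta> 2 1))"
  proof -
    have "map_eq 3 (lcomp (placed 1 2 f) (diagram [(1, 2, 2, \<beta>), (0, 2, 2, \<beta>)]))
                    (lcomp (ltens 1 lid f) (betanm \<beta> 2 1))"
      using assms(1) valid_is_map[of 3 "[(1, 2, 2, \<beta>), (0, 2, 2, \<beta>)]"]
      by (intro lcomp_cong' map_eq_sym[OF betanm_2_1] map_eq_sym[OF ltens_lid_left]) auto
    then show ?thesis
      by (simp add: lcomp_assoc)
  qed
  also have "map_eq 3 \<dots> (lcomp (betanm \<beta> n 1) (ltens 2 f lid))"
    using assms(2) by (simp add: beta_inv_inv_def numeral_3_eq_3)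
  finally show ?thesis
    by (simp add: ltens_lid_right)
qed

text \<open>\<open>\<Lambda> = (id \<otimes> \<beta> \<otimes> id)(\<Delta> \<otimes> \<Delta>)\<close>, followed by \<open>f \<otimes> g\<close>, as a diagram; this is the shape of
  the convolution products \<open>f \<star> g\<close> on \<open>H \<otimes> H\<close>.\<close>

lemma Lam_diagram:
  assumes "is_map 1 2 \<Delta>" "is_map 2 2 \<beta>"
  shows "map_eq 2 (Lam \<beta> \<Delta>) (diagram [(1, 1, 2, \<Delta>), (0, 1, 2, \<Delta>), (1, 2, 2, \<beta>)])"
proof -
  have "map_eq 4 (placed 0 3 (ltens 1 lid \<beta>)) (placed 0 3 (placed 1 2 \<beta>))"
    by (rule placed_cong[OF ltens_lid_left]) simp_all
  also have "map_eq 4 \<dots> (placed 1 2 \<beta>)"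
    using placed_placed[of 1 2 3 0 4 \<beta>] by simp
  finally have mid: "map_eq 4 (ltens 3 (ltens 1 lid \<beta>) lid) (placed 1 2 \<beta>)"
    by (simp add: ltens_lid_right)
  have "map_eq 2 (Lam \<beta> \<Delta>) (lcomp (placed 1 2 \<beta>) (lcomp (placed 0 1 \<Delta>) (placed 1 1 \<Delta>)))"
    unfolding Lam_def using assms
    by (intro lcomp_cong[OF ltens_split mid] is_map_lcomp is_map_placed) auto
  then show ?thesis
    by (simp add: lcomp_assoc)
qed

lemma lcomp_ltens_Lam:
  assumes "is_map 1 2 \<Delta>" "is_map 2 2 \<beta>"
  shows "map_eq 2 (lcomp (ltens 2 f g) (Lam \<beta> \<Delta>))
           (diagram [(1, 1, 2, \<Delta>), (0, 1, 2, \<Delta>), (1, 2, 2, \<beta>), (2, 2, n, g), (0, 2, m, f)])"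
proof -
  have "map_eq 2 (lcomp (ltens 2 f g) (Lam \<beta> \<Delta>))
          (lcomp (diagram [(2, 2, n, g), (0, 2, m, f)]) (diagram [(1, 1, 2, \<Delta>), (0, 1, 2, \<Delta>), (1, 2, 2, \<beta>)]))"
    using assms valid_is_map[of 2 "[(1, 1, 2, \<Delta>), (0, 1, 2, \<Delta>), (1, 2, 2, \<beta>)]"]
    by (intro lcomp_cong Lam_diagram) (auto intro: ltens_split[of 2 2 4, simplified])
  then show ?thesis
    by (simp only: diagram_append[symmetric] append.simps)
qed

lemma convolution_diagram:
  assumes \<Delta>: "is_map 1 2 \<Delta>" and xs: "valid 1 xs" and \<phi>: "map_eq 1 \<phi> (diagram xs)"
  shows "map_eq 1 (lcomp (ltens 1 \<phi> lid) \<Delta>) (diagram ((0, 1, 2, \<Delta>) # shift 0 xs))"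
    and "map_eq 1 (lcomp (ltens 1 lid \<phi>) \<Delta>) (diagram ((0, 1, 2, \<Delta>) # shift 1 xs))"
proof -
  have placed_\<phi>: "map_eq 2 (placed i 1 \<phi>) (diagram (shift i xs))" if "i \<le> 1" for i
  proof -
    have "map_eq 2 (placed i 1 \<phi>) (placed i 1 (diagram xs))"
      using \<phi> that by (intro placed_cong) auto
    also have "map_eq 2 \<dots> (diagram (shift i xs))"
      using xs that by (intro map_eq_sym[OF diagram_shift]) auto
    finally show ?thesis .
  qed
  have after_\<Delta>: "map_eq 1 (lcomp F \<Delta>) (diagram ((0, 1, 2, \<Delta>) # ys))"
    if "map_eq 2 F (diagram ys)" for F ys
    using that \<Delta> by (simp, intro lcomp_cong placed_0_sym is_map_placed) auto
  show "map_eq 1 (lcomp (ltens 1 \<phi> lid) \<Delta>) (diagram ((0, 1, 2, \<Delta>) # shift 0 xs))"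
    using after_\<Delta> placed_\<phi>[of 0] by (simp add: ltens_lid_right)
  show "map_eq 1 (lcomp (ltens 1 lid \<phi>) \<Delta>) (diagram ((0, 1, 2, \<Delta>) # shift 1 xs))"
    using after_\<Delta> map_eq_trans[OF ltens_lid_left[of 1 1 2] placed_\<phi>[of 1]] by simp
qed

section \<open>Braided Hopf algebras as diagram equations\<close>

locale braided_hopf_algebra =
  fixes \<Delta> \<delta> \<mu> u S \<beta> :: "'a lmap"
  assumes hopf: "braided_hopf \<Delta> \<delta> \<mu> u S \<beta>"
begin

lemma is_map_struct[simp]:
  "is_map 1 2 \<Delta>" "is_map 1 0 \<delta>" "is_map 2 1 \<mu>" "is_map 0 1 u" "is_map 1 1 S" "is_map 2 2 \<beta>"
  using hopf by (auto simp: braided_hopf_def braided_bialgebra_def braiding_def)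

lemma is_map_struct_Suc[simp]:
  "is_map (Suc 0) (Suc (Suc 0)) \<Delta>" "is_map (Suc 0) 2 \<Delta>" "is_map (Suc 0) 0 \<delta>"
  "is_map (Suc (Suc 0)) (Suc 0) \<mu>" "is_map 2 (Suc 0) \<mu>" "is_map 0 (Suc 0) u"
  "is_map (Suc 0) (Suc 0) S" "is_map (Suc (Suc 0)) (Suc (Suc 0)) \<beta>"
  using is_map_struct by (simp_all add: numeral_2_eq_2)

lemmas laws = hopf[unfolded braided_hopf_def braided_bialgebra_def beta_compat_def
  beta_inv_def beta_inv_inv_def]

abbreviation "Dl i \<equiv> (i, 1::nat, 2::nat, \<Delta>)"
abbreviation "El i \<equiv> (i, 1::nat, 0::nat, \<delta>)"
abbreviation "Ml i \<equiv> (i, 2::nat, 1::nat, \<mu>)"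
abbreviation "Ul i \<equiv> (i, 0::nat, 1::nat, u)"
abbreviation "Sl i \<equiv> (i, 1::nat, 1::nat, S)"
abbreviation "Bl i \<equiv> (i, 2::nat, 2::nat, \<beta>)"

lemma assoc: "map_eq 3 (diagram [Ml 0, Ml 0]) (diagram [Ml 1, Ml 0])"
proof -
  have "map_eq 3 (diagram [Ml 0, Ml 0]) (lcomp \<mu> (ltens 2 \<mu> lid))"
    by (simp only: diagram.simps lcomp_lid_left ltens_lid_right)
       (rule lcomp_cong[OF map_eq_refl placed_0 is_map_placed[OF is_map_struct(3)]], simp_all)
  also have "map_eq 3 \<dots> (lcomp \<mu> (ltens 1 lid \<mu>))"
    using laws by blast
  also have "map_eq 3 \<dots> (diagram [Ml 1, Ml 0])"
    by (simp only: diagram.simps lcomp_lid_left ltens_lid_right)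
       (rule lcomp_cong[OF ltens_lid_left placed_0_sym is_map_placed[OF is_map_struct(3)]], simp_all)
  finally show ?thesis .
qed

lemma unit_left: "map_eq 1 (diagram [Ul 0, Ml 0]) (diagram [])"
proof -
  have "map_eq 1 (diagram [Ul 0, Ml 0]) (lcomp \<mu> (ltens 0 u lid))"
    by (simp only: diagram.simps lcomp_lid_left ltens_lid_right)
       (rule lcomp_cong[OF map_eq_refl placed_0 is_map_placed[OF is_map_struct(4)]], simp_all)
  also have "map_eq 1 \<dots> lid"
    using laws by blast
  finally show ?thesis by simp
qed

lemma unit_right: "map_eq 1 (diagram [Ul 1, Ml 0]) (diagram [])"
proof -
  have "map_eq 1 (diagram [Ul 1, Ml 0]) (lcomp \<mu> (ltens 1 lid u))"
    by (simp only: diagram.simps lcomp_lid_left ltens_lid_right)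
       (rule lcomp_cong'[OF map_eq_sym[OF ltens_lid_left] placed_0 is_map_placed[OF is_map_struct(4)]], simp_all)
  also have "map_eq 1 \<dots> lid"
    using laws by blast
  finally show ?thesis by simp
qed

lemma coassoc: "map_eq 1 (diagram [Dl 0, Dl 0]) (diagram [Dl 0, Dl 1])"
proof -
  have "map_eq 1 (diagram [Dl 0, Dl 0]) (lcomp (ltens 1 \<Delta> lid) \<Delta>)"
    by (simp only: diagram.simps lcomp_lid_left ltens_lid_right)
       (rule lcomp_cong[OF placed_0 map_eq_refl[of 2]], simp)
  also have "map_eq 1 \<dots> (lcomp (ltens 1 lid \<Delta>) \<Delta>)"
    using laws by blast
  also have "map_eq 1 \<dots> (diagram [Dl 0, Dl 1])"
    by (simp only: diagram.simps lcomp_lid_left ltens_lid_right)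
       (rule lcomp_cong[OF placed_0_sym ltens_lid_left is_map_placed[OF is_map_struct(1)]], simp_all)
  finally show ?thesis .
qed

lemma counit_left: "map_eq 1 (diagram [Dl 0, El 0]) (diagram [])"
proof -
  have "map_eq 1 (diagram [Dl 0, El 0]) (lcomp (ltens 1 \<delta> lid) \<Delta>)"
    by (simp only: diagram.simps lcomp_lid_left ltens_lid_right)
       (rule lcomp_cong[OF placed_0 map_eq_refl[of 2]], simp)
  also have "map_eq 1 \<dots> lid"
    using laws by blast
  finally show ?thesis by simp
qed

lemma counit_right: "map_eq 1 (diagram [Dl 0, El 1]) (diagram [])"
proof -
  have "map_eq 1 (diagram [Dl 0, El 1]) (lcomp (ltens 1 lid \<delta>) \<Delta>)"
    by (simp only: diagram.simps lcomp_lid_left ltens_lid_right)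
       (rule lcomp_cong[OF placed_0 map_eq_sym[OF ltens_lid_left[of 1 1 2]]], simp_all)
  also have "map_eq 1 \<dots> lid"
    using laws by blast
  finally show ?thesis by simp
qed

lemma antipode_left: "map_eq 1 (diagram [Dl 0, Sl 0, Ml 0]) (diagram [El 0, Ul 0])"
proof -
  have "map_eq 1 (diagram [Dl 0, Sl 0, Ml 0]) (lcomp (lcomp \<mu> (ltens 1 S lid)) \<Delta>)"
    by (simp only: diagram.simps lcomp_lid_left ltens_lid_right)
       (rule lcomp_cong[OF placed_0 lcomp_cong[OF map_eq_refl placed_0 is_map_placed[of 1 1 S 0 2 2]]], simp_all)
  also have "map_eq 1 \<dots> (lcomp u \<delta>)"
    using laws by (simp add: lcomp_assoc)
  also have "map_eq 1 \<dots> (diagram [El 0, Ul 0])"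
    by (simp only: diagram.simps lcomp_lid_left ltens_lid_right)
       (rule lcomp_cong[OF placed_0_sym placed_0_sym is_map_placed[OF is_map_struct(2)]], simp_all)
  finally show ?thesis .
qed

lemma antipode_right: "map_eq 1 (diagram [Dl 0, Sl 1, Ml 0]) (diagram [El 0, Ul 0])"
proof -
  have "map_eq 1 (diagram [Dl 0, Sl 1, Ml 0]) (lcomp (lcomp \<mu> (ltens 1 lid S)) \<Delta>)"
    by (simp only: diagram.simps lcomp_lid_left ltens_lid_right)
       (rule lcomp_cong[OF placed_0 lcomp_cong'[OF map_eq_sym[OF ltens_lid_left] placed_0 is_map_placed[of 1 1 S 1 2 2]]], simp_all)
  also have "map_eq 1 \<dots> (lcomp u \<delta>)"
    using laws by (simp add: lcomp_assoc)
  also have "map_eq 1 \<dots> (diagram [El 0, Ul 0])"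
    by (simp only: diagram.simps lcomp_lid_left ltens_lid_right)
       (rule lcomp_cong[OF placed_0_sym placed_0_sym is_map_placed[OF is_map_struct(2)]], simp_all)
  finally show ?thesis .
qed

lemma comult_unit: "map_eq 0 (diagram [Ul 0, Dl 0]) (diagram [Ul 0, Ul 0])"
proof -
  have "map_eq 0 (diagram [Ul 0, Dl 0]) (lcomp \<Delta> u)"
    by (simp only: diagram.simps lcomp_lid_left)
       (rule lcomp_cong[OF placed_0 placed_0], simp)
  also have "map_eq 0 \<dots> (ltens 0 u u)"
    using laws by blast
  also have "map_eq 0 \<dots> (diagram [Ul 0, Ul 0])"
    by (simp only: diagram.simps lcomp_lid_left) (rule ltens_split, simp)
  finally show ?thesis .
qed

lemma unit_braid: "map_eq 1 (diagram [Ul 0]) (diagram [Ul 1, Bl 0])"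
proof -
  have "beta_inv \<beta> 0 1 u"
    using hopf by (simp add: braided_hopf_def braided_bialgebra_def beta_compat_def)
  then have ax: "map_eq 1 (lcomp (ltens 0 u lid) (betanm \<beta> 1 0))
                          (lcomp (betanm \<beta> 1 1) (ltens 1 lid u))"
    unfolding beta_inv_def One_nat_def .
  have "map_eq 1 (diagram [Ul 0]) (lcomp (ltens 0 u lid) (betanm \<beta> 1 0))"
    by (simp add: ltens_lid_right One_nat_def)
  also have "map_eq 1 \<dots> (lcomp (betanm \<beta> 1 1) (ltens 1 lid u))" by (rule ax)
  also have "map_eq 1 \<dots> (diagram [Ul 1, Bl 0])"
    unfolding betanm_1_1 by (simp only: diagram.simps lcomp_lid_left)
       (rule lcomp_cong_left[OF ltens_lid_left], simp)
  finally show ?thesis .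
qed

lemma unit_braid_inv: "map_eq 1 (diagram [Ul 1]) (diagram [Ul 0, Bl 0])"
proof -
  have "beta_inv_inv \<beta> 0 1 u"
    using hopf by (simp add: braided_hopf_def braided_bialgebra_def beta_compat_def)
  then have ax: "map_eq 1 (lcomp (ltens 1 lid u) (betanm \<beta> 0 1))
                          (lcomp (betanm \<beta> 1 1) (ltens 0 u lid))"
    unfolding beta_inv_inv_def One_nat_def .
  have "map_eq 1 (diagram [Ul 1]) (lcomp (ltens 1 lid u) (betanm \<beta> 0 1))"
    by simp (rule map_eq_sym, rule ltens_lid_left, simp)
  also have "map_eq 1 \<dots> (lcomp (betanm \<beta> 1 1) (ltens 0 u lid))" by (rule ax)
  also have "lcomp (betanm \<beta> 1 1) (ltens 0 u lid) = diagram [Ul 0, Bl 0]"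
    by (simp add: betanm_1_1 ltens_lid_right)
  finally show ?thesis .
qed

lemma bialgebra: "map_eq 2 (diagram [Ml 0, Dl 0]) (diagram [Dl 1, Dl 0, Bl 1, Ml 2, Ml 0])"
proof -
  have "map_eq 2 (diagram [Ml 0, Dl 0]) (lcomp \<Delta> \<mu>)"
    by (simp only: diagram.simps lcomp_lid_left)
       (rule lcomp_cong[OF placed_0 placed_0], simp)
  also have "map_eq 2 \<dots> (lcomp (ltens 2 \<mu> \<mu>) (Lam \<beta> \<Delta>))"
    using laws by blast
  also have "map_eq 2 \<dots> (diagram [Dl 1, Dl 0, Bl 1, Ml 2, Ml 0])"
    by (rule lcomp_ltens_Lam) simp_all
  finally show ?thesis .
qed

lemma mult_braid: "map_eq 3 (diagram [Bl 0, Bl 1, Ml 0]) (diagram [Ml 1, Bl 0])"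
proof -
  have "beta_inv \<beta> 2 1 \<mu>"
    using hopf by (simp add: braided_hopf_def braided_bialgebra_def beta_compat_def)
  then show ?thesis
    using beta_inv_binary[of \<beta> 1 \<mu>, unfolded betanm_1_1] by simp
qed

lemma mult_braid_inv: "map_eq 3 (diagram [Bl 1, Bl 0, Ml 1]) (diagram [Ml 0, Bl 0])"
proof -
  have "beta_inv_inv \<beta> 2 1 \<mu>"
    using hopf by (simp add: braided_hopf_def braided_bialgebra_def beta_compat_def)
  then show ?thesis
    using beta_inv_inv_binary[of \<beta> 1 \<mu>, unfolded betanm_1_1] by simp
qed

subsection \<open>The antipode is braided anti-comultiplicative\<close>

text \<open>Write \<open>\<Phi> = \<beta> (S \<otimes> S) \<Delta>\<close>, the diagram \<open>[Dl 0, Sl 0, Sl 1, Bl 0]\<close>, and \<open>\<star>\<close> for the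
  convolution product of maps \<open>H \<rightarrow> H \<otimes> H\<close>, where \<open>H \<otimes> H\<close> carries the product
  \<open>(\<mu> \<otimes> \<mu>)(id \<otimes> \<beta> \<otimes> id)\<close> (the diagram \<open>[Bl 1, Ml 2, Ml 0]\<close>) with unit \<open>1 \<otimes> 1\<close>.
  We show \<open>\<Delta> S = \<Phi>\<close> by proving that both are convolution inverses of \<open>\<Delta>\<close>.\<close>

text \<open>The product of \<open>H \<otimes> H\<close> is associative \<dots>\<close>

lemma tensor_mult_assoc:
  "map_eq 6 (diagram [Bl 1, Ml 2, Ml 0, Bl 1, Ml 2, Ml 0]) (diagram [Bl 3, Ml 4, Ml 2, Bl 1, Ml 2, Ml 0])"
proof -
  have "map_eq 6 (diagram [Bl 1, Ml 2, Ml 0, Bl 1, Ml 2, Ml 0])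
      (diagram [Bl 1, Ml 2, Bl 2, Ml 0, Ml 2, Ml 0])"
    by (rule interchange[where p=2]) simp_all
  also have "map_eq 6 \<dots> (diagram [Bl 1, Bl 3, Bl 2, Ml 3, Ml 0, Ml 2, Ml 0])"
    by (rule rewrite_back_at[OF mult_braid_inv, where p=1 and i=2]) simp_all
  also have "map_eq 6 \<dots> (diagram [Bl 1, Bl 3, Bl 2, Ml 0, Ml 2, Ml 2, Ml 0])"
    by (rule interchange[where p=3]) simp_all
  also have "map_eq 6 \<dots> (diagram [Bl 1, Bl 3, Bl 2, Ml 0, Ml 3, Ml 2, Ml 0])"
    by (rule rewrite_at[OF assoc, where p=4 and i=2]) simp_all
  also have "map_eq 6 \<dots> (diagram [Bl 1, Bl 3, Bl 2, Ml 0, Ml 3, Ml 0, Ml 1])"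
    by (rule interchange[where p=5]) simp_all
  also have "map_eq 6 \<dots> (diagram [Bl 1, Bl 3, Bl 2, Ml 0, Ml 0, Ml 2, Ml 1])"
    by (rule interchange[where p=4]) simp_all
  also have "map_eq 6 \<dots> (diagram [Bl 1, Bl 3, Bl 2, Ml 1, Ml 0, Ml 2, Ml 1])"
    by (rule rewrite_at[OF assoc, where p=3 and i=0]) simp_all
  also have "map_eq 6 \<dots> (diagram [Bl 1, Bl 3, Bl 2, Ml 1, Ml 3, Ml 0, Ml 1])"
    by (rule interchange[where p=4]) simp_all
  also have "map_eq 6 \<dots> (diagram [Bl 1, Bl 3, Bl 2, Ml 4, Ml 1, Ml 0, Ml 1])"
    by (rule interchange[where p=3]) simp_all
  also have "map_eq 6 \<dots> (diagram [Bl 1, Bl 3, Bl 2, Ml 4, Ml 1, Ml 2, Ml 0])"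
    by (rule interchange[where p=5]) simp_all
  also have "map_eq 6 \<dots> (diagram [Bl 3, Bl 1, Bl 2, Ml 4, Ml 1, Ml 2, Ml 0])"
    by (rule interchange[where p=0]) simp_all
  also have "map_eq 6 \<dots> (diagram [Bl 3, Bl 1, Ml 4, Bl 2, Ml 1, Ml 2, Ml 0])"
    by (rule interchange[where p=2]) simp_all
  also have "map_eq 6 \<dots> (diagram [Bl 3, Ml 4, Bl 1, Bl 2, Ml 1, Ml 2, Ml 0])"
    by (rule interchange[where p=1]) simp_all
  also have "map_eq 6 \<dots> (diagram [Bl 3, Ml 4, Ml 2, Bl 1, Ml 2, Ml 0])"
    by (rule rewrite_at[OF mult_braid, where p=2 and i=1]) simp_all
  finally show ?thesis .
qed

text \<open>\<dots> with two-sided unit \<open>1 \<otimes> 1\<close>.\<close>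

lemma tensor_unit_left: "map_eq 2 (diagram [Ul 0, Ul 0, Bl 1, Ml 2, Ml 0]) (diagram [])"
proof -
  have "map_eq 2 (diagram [Ul 0, Ul 0, Bl 1, Ml 2, Ml 0])
      (diagram [Ul 0, Ul 1, Bl 1, Ml 2, Ml 0])"
    by (rule interchange[where p=0]) simp_all
  also have "map_eq 2 \<dots> (diagram [Ul 0, Ul 2, Ml 2, Ml 0])"
    by (rule rewrite_back_at[OF unit_braid_inv, where p=1 and i=1]) simp_all
  also have "map_eq 2 \<dots> (diagram [Ul 0, Ml 0])"
    by (rule rewrite_at[OF unit_left, where p=1 and i=2]) simp_all
  also have "map_eq 2 \<dots> (diagram [])"
    by (rule rewrite_at[OF unit_left, where p=0 and i=0]) simp_all
  finally show ?thesis .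
qed

lemma tensor_unit_right: "map_eq 2 (diagram [Ul 2, Ul 2, Bl 1, Ml 2, Ml 0]) (diagram [])"
proof -
  have "map_eq 2 (diagram [Ul 2, Ul 2, Bl 1, Ml 2, Ml 0])
      (diagram [Ul 2, Ul 3, Bl 1, Ml 2, Ml 0])"
    by (rule interchange[where p=0]) simp_all
  also have "map_eq 2 \<dots> (diagram [Ul 2, Bl 1, Ul 3, Ml 2, Ml 0])"
    by (rule interchange[where p=1]) simp_all
  also have "map_eq 2 \<dots> (diagram [Ul 1, Ul 3, Ml 2, Ml 0])"
    by (rule rewrite_back_at[OF unit_braid, where p=0 and i=1]) simp_all
  also have "map_eq 2 \<dots> (diagram [Ul 1, Ml 0])"
    by (rule rewrite_at[OF unit_right, where p=1 and i=2]) simp_all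
  also have "map_eq 2 \<dots> (diagram [])"
    by (rule rewrite_at[OF unit_right, where p=0 and i=0]) simp_all
  finally show ?thesis .
qed

text \<open>\<open>\<Phi> \<star> \<Delta> = (1 \<otimes> 1) \<delta>\<close>: in Sweedler notation \<open>\<Phi>(h\<^sub>1) \<Delta>(h\<^sub>2) = \<delta>(h) 1 \<otimes> 1\<close>.\<close>

lemma conv_Phi_comult:
  "map_eq 1 (diagram [Dl 0, Dl 0, Sl 0, Sl 1, Bl 0, Dl 2, Bl 1, Ml 2, Ml 0]) (diagram [El 0, Ul 0, Ul 0])"
proof -
  have "map_eq 1 (diagram [Dl 0, Dl 0, Sl 0, Sl 1, Bl 0, Dl 2, Bl 1, Ml 2, Ml 0])
      (diagram [Dl 0, Dl 0, Sl 0, Sl 1, Dl 2, Bl 0, Bl 1, Ml 2, Ml 0])"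
    by (rule interchange[where p=4]) simp_all
  also have "map_eq 1 \<dots> (diagram [Dl 0, Dl 0, Sl 0, Sl 1, Dl 2, Bl 0, Bl 1, Ml 0, Ml 1])"
    by (rule interchange[where p=7]) simp_all
  also have "map_eq 1 \<dots> (diagram [Dl 0, Dl 0, Sl 0, Sl 1, Dl 2, Ml 1, Bl 0, Ml 1])"
    by (rule rewrite_at[OF mult_braid, where p=5 and i=0]) simp_all
  also have "map_eq 1 \<dots> (diagram [Dl 0, Dl 1, Sl 0, Sl 1, Dl 2, Ml 1, Bl 0, Ml 1])"
    by (rule rewrite_at[OF coassoc, where p=0 and i=0]) simp_all
  also have "map_eq 1 \<dots> (diagram [Dl 0, Dl 1, Sl 0, Dl 2, Sl 1, Ml 1, Bl 0, Ml 1])"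
    by (rule interchange[where p=3]) simp_all
  also have "map_eq 1 \<dots> (diagram [Dl 0, Dl 1, Dl 2, Sl 0, Sl 1, Ml 1, Bl 0, Ml 1])"
    by (rule interchange[where p=2]) simp_all
  also have "map_eq 1 \<dots> (diagram [Dl 0, Dl 1, Dl 1, Sl 0, Sl 1, Ml 1, Bl 0, Ml 1])"
    by (rule rewrite_back_at[OF coassoc, where p=1 and i=1]) simp_all
  also have "map_eq 1 \<dots> (diagram [Dl 0, Dl 1, Sl 0, Dl 1, Sl 1, Ml 1, Bl 0, Ml 1])"
    by (rule interchange[where p=2]) simp_all
  also have "map_eq 1 \<dots> (diagram [Dl 0, Dl 1, Sl 0, El 1, Ul 1, Bl 0, Ml 1])"
    by (rule rewrite_at[OF antipode_left, where p=3 and i=1]) simp_all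
  also have "map_eq 1 \<dots> (diagram [Dl 0, Dl 1, El 1, Sl 0, Ul 1, Bl 0, Ml 1])"
    by (rule interchange[where p=2]) simp_all
  also have "map_eq 1 \<dots> (diagram [Dl 0, Sl 0, Ul 1, Bl 0, Ml 1])"
    by (rule rewrite_at[OF counit_left, where p=1 and i=1]) simp_all
  also have "map_eq 1 \<dots> (diagram [Dl 0, Sl 0, Ul 0, Ml 1])"
    by (rule rewrite_back_at[OF unit_braid, where p=2 and i=0]) simp_all
  also have "map_eq 1 \<dots> (diagram [Dl 0, Sl 0, Ml 0, Ul 0])"
    by (rule interchange[where p=2]) simp_all
  also have "map_eq 1 \<dots> (diagram [El 0, Ul 0, Ul 0])"
    by (rule rewrite_at[OF antipode_left, where p=0 and i=0]) simp_all
  finally show ?thesis .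
qed

text \<open>\<open>\<Delta> \<star> \<Delta> S = (1 \<otimes> 1) \<delta>\<close>, since \<open>\<Delta>\<close> is multiplicative.\<close>

lemma conv_comult_comultS:
  "map_eq 1 (diagram [Dl 0, Dl 0, Sl 2, Dl 2, Bl 1, Ml 2, Ml 0]) (diagram [El 0, Ul 0, Ul 0])"
proof -
  have "map_eq 1 (diagram [Dl 0, Dl 0, Sl 2, Dl 2, Bl 1, Ml 2, Ml 0])
      (diagram [Dl 0, Sl 1, Dl 0, Dl 2, Bl 1, Ml 2, Ml 0])"
    by (rule interchange[where p=1]) simp_all
  also have "map_eq 1 \<dots> (diagram [Dl 0, Sl 1, Dl 1, Dl 0, Bl 1, Ml 2, Ml 0])"
    by (rule interchange[where p=2]) simp_all
  also have "map_eq 1 \<dots> (diagram [Dl 0, Sl 1, Ml 0, Dl 0])"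
    by (rule rewrite_back_at[OF bialgebra, where p=2 and i=0]) simp_all
  also have "map_eq 1 \<dots> (diagram [El 0, Ul 0, Dl 0])"
    by (rule rewrite_at[OF antipode_right, where p=0 and i=0]) simp_all
  also have "map_eq 1 \<dots> (diagram [El 0, Ul 0, Ul 0])"
    by (rule rewrite_at[OF comult_unit, where p=1 and i=0]) simp_all
  finally show ?thesis .
qed

text \<open>\<open>\<Delta> S = (\<Phi> \<star> \<Delta>) \<star> \<Delta> S\<close>, by the previous identity and the unit laws.\<close>

lemma comultS_expand:
  "map_eq 1 (diagram [Sl 0, Dl 0])
     (diagram [Dl 0, Dl 1, Dl 0, Sl 0, Sl 1, Bl 0, Dl 2, Bl 1, Ml 2, Ml 0, Sl 2, Dl 2, Bl 1, Ml 2, Ml 0])"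
proof -
  have "map_eq 1 (diagram [Sl 0, Dl 0])
      (diagram [Sl 0, Dl 0, Ul 0, Ul 0, Bl 1, Ml 2, Ml 0])"
    by (rule rewrite_back_at[OF tensor_unit_left, where p=2 and i=0]) simp_all
  also have "map_eq 1 \<dots> (diagram [Dl 0, El 0, Sl 0, Dl 0, Ul 0, Ul 0, Bl 1, Ml 2, Ml 0])"
    by (rule rewrite_back_at[OF counit_left, where p=0 and i=0]) simp_all
  also have "map_eq 1 \<dots> (diagram [Dl 0, El 0, Sl 0, Ul 0, Dl 1, Ul 0, Bl 1, Ml 2, Ml 0])"
    by (rule interchange[where p=3]) simp_all
  also have "map_eq 1 \<dots> (diagram [Dl 0, El 0, Ul 0, Sl 1, Dl 1, Ul 0, Bl 1, Ml 2, Ml 0])"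
    by (rule interchange[where p=2]) simp_all
  also have "map_eq 1 \<dots> (diagram [Dl 0, El 0, Ul 0, Sl 1, Ul 0, Dl 2, Bl 1, Ml 2, Ml 0])"
    by (rule interchange[where p=4]) simp_all
  also have "map_eq 1 \<dots> (diagram [Dl 0, El 0, Ul 0, Ul 0, Sl 2, Dl 2, Bl 1, Ml 2, Ml 0])"
    by (rule interchange[where p=3]) simp_all
  also have "map_eq 1 \<dots> (diagram [Dl 0, Dl 0, Dl 0, Sl 0, Sl 1, Bl 0, Dl 2, Bl 1, Ml 2, Ml 0, Sl 2, Dl 2, Bl 1, Ml 2, Ml 0])"
    by (rule rewrite_back_at[OF conv_Phi_comult, where p=1 and i=0]) simp_all
  also have "map_eq 1 \<dots> (diagram [Dl 0, Dl 1, Dl 0, Sl 0, Sl 1, Bl 0, Dl 2, Bl 1, Ml 2, Ml 0, Sl 2, Dl 2, Bl 1, Ml 2, Ml 0])"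
    by (rule rewrite_at[OF coassoc, where p=0 and i=0]) simp_all
  finally show ?thesis .
qed

text \<open>Associativity: \<open>(\<Phi> \<star> \<Delta>) \<star> \<Delta> S = \<Phi> \<star> (\<Delta> \<star> \<Delta> S)\<close>.\<close>

lemma convolution_reassoc:
  "map_eq 1 (diagram [Dl 0, Dl 1, Dl 0, Sl 0, Sl 1, Bl 0, Dl 2, Bl 1, Ml 2, Ml 0, Sl 2, Dl 2, Bl 1, Ml 2, Ml 0])
     (diagram [Dl 0, Dl 0, Sl 0, Sl 1, Bl 0, Dl 2, Dl 2, Sl 4, Dl 4, Bl 3, Ml 4, Ml 2, Bl 1, Ml 2, Ml 0])"
proof -
  have "map_eq 1 (diagram [Dl 0, Dl 1, Dl 0, Sl 0, Sl 1, Bl 0, Dl 2, Bl 1, Ml 2, Ml 0, Sl 2, Dl 2, Bl 1, Ml 2, Ml 0])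
      (diagram [Dl 0, Dl 1, Dl 0, Sl 0, Sl 1, Bl 0, Dl 2, Bl 1, Ml 2, Sl 3, Ml 0, Dl 2, Bl 1, Ml 2, Ml 0])"
    by (rule interchange[where p=9]) simp_all
  also have "map_eq 1 \<dots> (diagram [Dl 0, Dl 1, Dl 0, Sl 0, Sl 1, Bl 0, Dl 2, Bl 1, Sl 4, Ml 2, Ml 0, Dl 2, Bl 1, Ml 2, Ml 0])"
    by (rule interchange[where p=8]) simp_all
  also have "map_eq 1 \<dots> (diagram [Dl 0, Dl 1, Dl 0, Sl 0, Sl 1, Bl 0, Dl 2, Sl 4, Bl 1, Ml 2, Ml 0, Dl 2, Bl 1, Ml 2, Ml 0])"
    by (rule interchange[where p=7]) simp_all
  also have "map_eq 1 \<dots> (diagram [Dl 0, Dl 1, Dl 0, Sl 0, Sl 1, Bl 0, Dl 2, Sl 4, Bl 1, Ml 2, Dl 3, Ml 0, Bl 1, Ml 2, Ml 0])"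
    by (rule interchange[where p=10]) simp_all
  also have "map_eq 1 \<dots> (diagram [Dl 0, Dl 1, Dl 0, Sl 0, Sl 1, Bl 0, Dl 2, Sl 4, Bl 1, Dl 4, Ml 2, Ml 0, Bl 1, Ml 2, Ml 0])"
    by (rule interchange[where p=9]) simp_all
  also have "map_eq 1 \<dots> (diagram [Dl 0, Dl 1, Dl 0, Sl 0, Sl 1, Bl 0, Dl 2, Sl 4, Dl 4, Bl 1, Ml 2, Ml 0, Bl 1, Ml 2, Ml 0])"
    by (rule interchange[where p=8]) simp_all
  also have "map_eq 1 \<dots> (diagram [Dl 0, Dl 1, Dl 0, Sl 0, Sl 1, Bl 0, Dl 2, Sl 4, Dl 4, Bl 3, Ml 4, Ml 2, Bl 1, Ml 2, Ml 0])"
    by (rule rewrite_at[OF tensor_mult_assoc, where p=9 and i=0]) simp_all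
  also have "map_eq 1 \<dots> (diagram [Dl 0, Dl 0, Dl 2, Sl 0, Sl 1, Bl 0, Dl 2, Sl 4, Dl 4, Bl 3, Ml 4, Ml 2, Bl 1, Ml 2, Ml 0])"
    by (rule interchange[where p=1]) simp_all
  also have "map_eq 1 \<dots> (diagram [Dl 0, Dl 0, Sl 0, Dl 2, Sl 1, Bl 0, Dl 2, Sl 4, Dl 4, Bl 3, Ml 4, Ml 2, Bl 1, Ml 2, Ml 0])"
    by (rule interchange[where p=2]) simp_all
  also have "map_eq 1 \<dots> (diagram [Dl 0, Dl 0, Sl 0, Sl 1, Dl 2, Bl 0, Dl 2, Sl 4, Dl 4, Bl 3, Ml 4, Ml 2, Bl 1, Ml 2, Ml 0])"
    by (rule interchange[where p=3]) simp_all
  also have "map_eq 1 \<dots> (diagram [Dl 0, Dl 0, Sl 0, Sl 1, Bl 0, Dl 2, Dl 2, Sl 4, Dl 4, Bl 3, Ml 4, Ml 2, Bl 1, Ml 2, Ml 0])"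
    by (rule interchange[where p=4]) simp_all
  finally show ?thesis .
qed

theorem comult_antipode: "map_eq 1 (diagram [Sl 0, Dl 0]) (diagram [Dl 0, Sl 0, Sl 1, Bl 0])"
proof -
  have "map_eq 1 (diagram [Sl 0, Dl 0])
      (diagram [Dl 0, Dl 0, Sl 0, Sl 1, Bl 0, Dl 2, Dl 2, Sl 4, Dl 4, Bl 3, Ml 4, Ml 2, Bl 1, Ml 2, Ml 0])"
    using map_eq_trans[OF comultS_expand convolution_reassoc] .
  also have "map_eq 1 \<dots> (diagram [Dl 0, Dl 0, Sl 0, Sl 1, Bl 0, El 2, Ul 2, Ul 2, Bl 1, Ml 2, Ml 0])"
    by (rule rewrite_at[OF conv_comult_comultS, where p=5 and i=2]) simp_all
  also have "map_eq 1 \<dots> (diagram [Dl 0, Dl 0, Sl 0, Sl 1, Bl 0, El 2])"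
    by (rule rewrite_at[OF tensor_unit_right, where p=6 and i=0]) simp_all
  also have "map_eq 1 \<dots> (diagram [Dl 0, Dl 0, Sl 0, Sl 1, El 2, Bl 0])"
    by (rule interchange[where p=4]) simp_all
  also have "map_eq 1 \<dots> (diagram [Dl 0, Dl 0, Sl 0, El 2, Sl 1, Bl 0])"
    by (rule interchange[where p=3]) simp_all
  also have "map_eq 1 \<dots> (diagram [Dl 0, Dl 0, El 2, Sl 0, Sl 1, Bl 0])"
    by (rule interchange[where p=2]) simp_all
  also have "map_eq 1 \<dots> (diagram [Dl 0, El 1, Dl 0, Sl 0, Sl 1, Bl 0])"
    by (rule interchange[where p=1]) simp_all
  also have "map_eq 1 \<dots> (diagram [Dl 0, Sl 0, Sl 1, Bl 0])"
    by (rule rewrite_at[OF counit_right, where p=0 and i=0]) simp_all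
  finally show ?thesis .
qed

end

section \<open>A \<beta>-invariant functional commuting with the product\<close>

locale braided_hopf_functional = braided_hopf_algebra +
  fixes K :: "'a lmap"
  assumes K_fun: "is_map 2 0 K"
    and K_inv: "beta_inv \<beta> 2 0 K"
    and K_conv_comm: "map_eq 2 (lcomp (ltens 2 K \<mu>) (Lam \<beta> \<Delta>)) (lcomp (ltens 2 \<mu> K) (Lam \<beta> \<Delta>))"
begin

lemma K_arity[simp]: "is_map 2 0 K" "is_map (Suc (Suc 0)) 0 K"
  using K_fun by (simp_all add: numeral_2_eq_2)

abbreviation "Kl i \<equiv> (i, 2::nat, 0::nat, K)"

lemma K_mu_commute:
  "map_eq 2 (diagram [Dl 1, Dl 0, Bl 1, Ml 2, Kl 0]) (diagram [Dl 1, Dl 0, Bl 1, Kl 2, Ml 0])"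
proof -
  have "map_eq 2 (diagram [Dl 1, Dl 0, Bl 1, Ml 2, Kl 0]) (lcomp (ltens 2 K \<mu>) (Lam \<beta> \<Delta>))"
    by (rule map_eq_sym, rule lcomp_ltens_Lam) simp_all
  also have "map_eq 2 \<dots> (lcomp (ltens 2 \<mu> K) (Lam \<beta> \<Delta>))"
    by (rule K_conv_comm)
  also have "map_eq 2 \<dots> (diagram [Dl 1, Dl 0, Bl 1, Kl 2, Ml 0])"
    by (rule lcomp_ltens_Lam) simp_all
  finally show ?thesis .
qed

lemma K_braid: "map_eq 3 (diagram [Bl 0, Bl 1, Kl 0]) (diagram [Kl 1])"
  using beta_inv_binary[OF is_map_struct(6) K_inv] by (simp add: One_nat_def)

abbreviation Ktilde :: "'a lmap" where
  "Ktilde \<equiv> lcomp K (lcomp (ltens 1 S lid) \<Delta>)"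

lemma Ktilde_diagram: "map_eq 1 Ktilde (diagram [Dl 0, Sl 0, Kl 0])"
proof -
  have "map_eq 1 (lcomp (lcomp K (placed 0 1 S)) \<Delta>)
                  (lcomp (lcomp (placed 0 2 K) (placed 0 1 S)) (placed 0 1 \<Delta>))"
    by (rule lcomp_cong[OF placed_0_sym
          lcomp_cong[OF map_eq_refl placed_0_sym is_map_placed[OF is_map_struct(5), of 0 2 2]]
          is_map_placed[OF is_map_struct(1), of 0 1 2]]) simp_all
  then show ?thesis
    by (simp only: diagram.simps lcomp_lid_left ltens_lid_right lcomp_assoc)
qed

text \<open>\<open>S(h\<^sub>1) K(S h\<^sub>2 \<otimes> h\<^sub>3) h\<^sub>4 = (K \<star> \<mu>)(S h\<^sub>1 \<otimes> h\<^sub>2)\<close>: after inserting \<open>\<beta>\<close>-invariance of \<open>K\<close>, the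
  factor \<open>S h\<^sub>1 \<otimes> S h\<^sub>2\<close> becomes \<open>\<Phi>(h\<^sub>1) = \<Delta>(S h\<^sub>1)\<close>.\<close>

lemma antipode_K_conv_mu:
  "map_eq 1 (diagram [Dl 0, Sl 0, Dl 1, Dl 1, Sl 1, Kl 1, Ml 0])
     (diagram [Dl 0, Sl 0, Dl 0, Dl 2, Bl 1, Ml 2, Kl 0])"
proof -
  have "map_eq 1 (diagram [Dl 0, Sl 0, Dl 1, Dl 1, Sl 1, Kl 1, Ml 0])
      (diagram [Dl 0, Dl 1, Sl 0, Dl 1, Sl 1, Kl 1, Ml 0])"
    by (rule interchange[where p=1]) simp_all
  also have "map_eq 1 \<dots> (diagram [Dl 0, Dl 1, Dl 1, Sl 0, Sl 1, Kl 1, Ml 0])"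
    by (rule interchange[where p=2]) simp_all
  also have "map_eq 1 \<dots> (diagram [Dl 0, Dl 1, Dl 2, Sl 0, Sl 1, Kl 1, Ml 0])"
    by (rule rewrite_at[OF coassoc, where p=1 and i=1]) simp_all
  also have "map_eq 1 \<dots> (diagram [Dl 0, Dl 0, Dl 2, Sl 0, Sl 1, Kl 1, Ml 0])"
    by (rule rewrite_back_at[OF coassoc, where p=0 and i=0]) simp_all
  also have "map_eq 1 \<dots> (diagram [Dl 0, Dl 0, Dl 2, Sl 0, Sl 1, Bl 0, Bl 1, Kl 0, Ml 0])"
    by (rule rewrite_back_at[OF K_braid, where p=5 and i=0]) simp_all
  also have "map_eq 1 \<dots> (diagram [Dl 0, Dl 0, Sl 0, Dl 2, Sl 1, Bl 0, Bl 1, Kl 0, Ml 0])"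
    by (rule interchange[where p=2]) simp_all
  also have "map_eq 1 \<dots> (diagram [Dl 0, Dl 0, Sl 0, Sl 1, Dl 2, Bl 0, Bl 1, Kl 0, Ml 0])"
    by (rule interchange[where p=3]) simp_all
  also have "map_eq 1 \<dots> (diagram [Dl 0, Dl 0, Sl 0, Sl 1, Bl 0, Dl 2, Bl 1, Kl 0, Ml 0])"
    by (rule interchange[where p=4]) simp_all
  also have "map_eq 1 \<dots> (diagram [Dl 0, Dl 0, Sl 0, Sl 1, Bl 0, Dl 2, Bl 1, Ml 2, Kl 0])"
    by (rule interchange[where p=7]) simp_all
  also have "map_eq 1 \<dots> (diagram [Dl 0, Sl 0, Dl 0, Dl 2, Bl 1, Ml 2, Kl 0])"
    by (rule rewrite_back_at[OF comult_antipode, where p=1 and i=0]) simp_all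
  finally show ?thesis .
qed

text \<open>\<open>(\<mu> \<star> K)(S h\<^sub>1 \<otimes> h\<^sub>2) = K~(h) 1\<close>: unwinding \<open>\<Delta> S = \<Phi>\<close> again, then \<beta>-invariance of \<open>\<mu>\<close>
  and the antipode axiom.\<close>

lemma antipode_mu_conv_K:
  "map_eq 1 (diagram [Dl 0, Sl 0, Dl 1, Dl 0, Bl 1, Kl 2, Ml 0]) (diagram [Dl 0, Sl 0, Kl 0, Ul 0])"
proof -
  have "map_eq 1 (diagram [Dl 0, Sl 0, Dl 1, Dl 0, Bl 1, Kl 2, Ml 0])
      (diagram [Dl 0, Sl 0, Dl 0, Dl 2, Bl 1, Kl 2, Ml 0])"
    by (rule interchange[where p=2]) simp_all
  also have "map_eq 1 \<dots> (diagram [Dl 0, Dl 0, Sl 0, Sl 1, Bl 0, Dl 2, Bl 1, Kl 2, Ml 0])"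
    by (rule rewrite_at[OF comult_antipode, where p=1 and i=0]) simp_all
  also have "map_eq 1 \<dots> (diagram [Dl 0, Dl 0, Sl 0, Sl 1, Dl 2, Bl 0, Bl 1, Kl 2, Ml 0])"
    by (rule interchange[where p=4]) simp_all
  also have "map_eq 1 \<dots> (diagram [Dl 0, Dl 0, Sl 0, Sl 1, Dl 2, Bl 0, Bl 1, Ml 0, Kl 1])"
    by (rule interchange[where p=7]) simp_all
  also have "map_eq 1 \<dots> (diagram [Dl 0, Dl 0, Sl 0, Sl 1, Dl 2, Ml 1, Bl 0, Kl 1])"
    by (rule rewrite_at[OF mult_braid, where p=5 and i=0]) simp_all
  also have "map_eq 1 \<dots> (diagram [Dl 0, Dl 1, Sl 0, Sl 1, Dl 2, Ml 1, Bl 0, Kl 1])"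
    by (rule rewrite_at[OF coassoc, where p=0 and i=0]) simp_all
  also have "map_eq 1 \<dots> (diagram [Dl 0, Dl 1, Sl 0, Dl 2, Sl 1, Ml 1, Bl 0, Kl 1])"
    by (rule interchange[where p=3]) simp_all
  also have "map_eq 1 \<dots> (diagram [Dl 0, Dl 1, Dl 2, Sl 0, Sl 1, Ml 1, Bl 0, Kl 1])"
    by (rule interchange[where p=2]) simp_all
  also have "map_eq 1 \<dots> (diagram [Dl 0, Dl 1, Dl 1, Sl 0, Sl 1, Ml 1, Bl 0, Kl 1])"
    by (rule rewrite_back_at[OF coassoc, where p=1 and i=1]) simp_all
  also have "map_eq 1 \<dots> (diagram [Dl 0, Dl 1, Sl 0, Dl 1, Sl 1, Ml 1, Bl 0, Kl 1])"
    by (rule interchange[where p=2]) simp_all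
  also have "map_eq 1 \<dots> (diagram [Dl 0, Dl 1, Sl 0, El 1, Ul 1, Bl 0, Kl 1])"
    by (rule rewrite_at[OF antipode_left, where p=3 and i=1]) simp_all
  also have "map_eq 1 \<dots> (diagram [Dl 0, Dl 1, El 1, Sl 0, Ul 1, Bl 0, Kl 1])"
    by (rule interchange[where p=2]) simp_all
  also have "map_eq 1 \<dots> (diagram [Dl 0, Sl 0, Ul 1, Bl 0, Kl 1])"
    by (rule rewrite_at[OF counit_left, where p=1 and i=1]) simp_all
  also have "map_eq 1 \<dots> (diagram [Dl 0, Sl 0, Ul 0, Kl 1])"
    by (rule rewrite_back_at[OF unit_braid, where p=2 and i=0]) simp_all
  also have "map_eq 1 \<dots> (diagram [Dl 0, Sl 0, Kl 0, Ul 0])"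
    by (rule interchange[where p=2]) simp_all
  finally show ?thesis .
qed

text \<open>\<open>S(h\<^sub>1) K~(h\<^sub>2) h\<^sub>3 = K~(h) 1\<close>.\<close>

lemma antipode_Ktilde:
  "map_eq 1 (diagram [Dl 0, Sl 0, Dl 1, Dl 1, Sl 1, Kl 1, Ml 0]) (diagram [Dl 0, Sl 0, Kl 0, Ul 0])"
proof -
  have "map_eq 1 (diagram [Dl 0, Sl 0, Dl 1, Dl 1, Sl 1, Kl 1, Ml 0])
      (diagram [Dl 0, Sl 0, Dl 0, Dl 2, Bl 1, Ml 2, Kl 0])"
    by (rule antipode_K_conv_mu)
  also have "map_eq 1 \<dots> (diagram [Dl 0, Sl 0, Dl 1, Dl 0, Bl 1, Ml 2, Kl 0])"
    by (rule interchange[where p=2]) simp_all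
  also have "map_eq 1 \<dots> (diagram [Dl 0, Sl 0, Dl 1, Dl 0, Bl 1, Kl 2, Ml 0])"
    by (rule rewrite_at[OF K_mu_commute, where p=2 and i=0]) simp_all
  also note antipode_mu_conv_K
  finally show ?thesis .
qed

text \<open>Multiplying the previous identity by \<open>h\<^sub>1\<close> from the left: \<open>K~(h\<^sub>1) h\<^sub>2 = h\<^sub>1 K~(h\<^sub>2)\<close>.\<close>

lemma Ktilde_central:
  "map_eq 1 (diagram [Dl 0, Dl 0, Sl 0, Kl 0]) (diagram [Dl 0, Dl 1, Sl 1, Kl 1])"
proof -
  have "map_eq 1 (diagram [Dl 0, Dl 0, Sl 0, Kl 0])
      (diagram [Dl 0, Dl 0, Sl 0, Kl 0, Ul 0, Ml 0])"
    by (rule rewrite_back_at[OF unit_left, where p=4 and i=0]) simp_all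
  also have "map_eq 1 \<dots> (diagram [Dl 0, El 0, Dl 0, Dl 0, Sl 0, Kl 0, Ul 0, Ml 0])"
    by (rule rewrite_back_at[OF counit_left, where p=0 and i=0]) simp_all
  also have "map_eq 1 \<dots> (diagram [Dl 0, El 0, Dl 0, Dl 0, Sl 0, Ul 0, Kl 1, Ml 0])"
    by (rule interchange[where p=5]) simp_all
  also have "map_eq 1 \<dots> (diagram [Dl 0, El 0, Dl 0, Dl 0, Ul 0, Sl 1, Kl 1, Ml 0])"
    by (rule interchange[where p=4]) simp_all
  also have "map_eq 1 \<dots> (diagram [Dl 0, El 0, Dl 0, Ul 0, Dl 1, Sl 1, Kl 1, Ml 0])"
    by (rule interchange[where p=3]) simp_all
  also have "map_eq 1 \<dots> (diagram [Dl 0, El 0, Ul 0, Dl 1, Dl 1, Sl 1, Kl 1, Ml 0])"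
    by (rule interchange[where p=2]) simp_all
  also have "map_eq 1 \<dots> (diagram [Dl 0, Dl 0, Sl 1, Ml 0, Dl 1, Dl 1, Sl 1, Kl 1, Ml 0])"
    by (rule rewrite_back_at[OF antipode_right, where p=1 and i=0]) simp_all
  also have "map_eq 1 \<dots> (diagram [Dl 0, Dl 0, Sl 1, Dl 2, Ml 0, Dl 1, Sl 1, Kl 1, Ml 0])"
    by (rule interchange[where p=3]) simp_all
  also have "map_eq 1 \<dots> (diagram [Dl 0, Dl 0, Sl 1, Dl 2, Dl 2, Ml 0, Sl 1, Kl 1, Ml 0])"
    by (rule interchange[where p=4]) simp_all
  also have "map_eq 1 \<dots> (diagram [Dl 0, Dl 0, Sl 1, Dl 2, Dl 2, Sl 2, Ml 0, Kl 1, Ml 0])"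
    by (rule interchange[where p=5]) simp_all
  also have "map_eq 1 \<dots> (diagram [Dl 0, Dl 0, Sl 1, Dl 2, Dl 2, Sl 2, Kl 2, Ml 0, Ml 0])"
    by (rule interchange[where p=6]) simp_all
  also have "map_eq 1 \<dots> (diagram [Dl 0, Dl 0, Sl 1, Dl 2, Dl 2, Sl 2, Kl 2, Ml 1, Ml 0])"
    by (rule rewrite_at[OF assoc, where p=7 and i=0]) simp_all
  also have "map_eq 1 \<dots> (diagram [Dl 0, Dl 1, Sl 1, Dl 2, Dl 2, Sl 2, Kl 2, Ml 1, Ml 0])"
    by (rule rewrite_at[OF coassoc, where p=0 and i=0]) simp_all
  also have "map_eq 1 \<dots> (diagram [Dl 0, Dl 1, Sl 1, Kl 1, Ul 1, Ml 0])"
    by (rule rewrite_at[OF antipode_Ktilde, where p=1 and i=1]) simp_all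
  also have "map_eq 1 \<dots> (diagram [Dl 0, Dl 1, Sl 1, Kl 1])"
    by (rule rewrite_at[OF unit_right, where p=4 and i=0]) simp_all
  finally show ?thesis .
qed

end

theorem mainTheorem3:
  fixes \<Delta> \<delta> \<mu> u S \<beta> K :: "'b lmap"
  assumes hopf: "braided_hopf \<Delta> \<delta> \<mu> u S \<beta>"
    and K_fun: "is_map 2 0 K"
    and K_inv: "beta_inv \<beta> 2 0 K"
    and comm: "map_eq 2 (lcomp (ltens 2 K \<mu>) (Lam \<beta> \<Delta>)) (lcomp (ltens 2 \<mu> K) (Lam \<beta> \<Delta>))"
  shows "map_eq 1 (lcomp (ltens 1 (lcomp K (lcomp (ltens 1 S lid) \<Delta>)) lid) \<Delta>)
                  (lcomp (ltens 1 lid (lcomp K (lcomp (ltens 1 S lid) \<Delta>))) \<Delta>)"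
proof -
  interpret braided_hopf_functional \<Delta> \<delta> \<mu> u S \<beta> K
    using assms by unfold_locales
  have K\<^sub>t: "valid 1 [Dl 0, Sl 0, Kl 0]" "map_eq 1 Ktilde (diagram [Dl 0, Sl 0, Kl 0])"
    using Ktilde_diagram by simp_all
  have "map_eq 1 (lcomp (ltens 1 Ktilde lid) \<Delta>) (diagram [Dl 0, Dl 0, Sl 0, Kl 0])"
    using convolution_diagram(1)[OF is_map_struct(1) K\<^sub>t] by simp
  also have "map_eq 1 \<dots> (diagram [Dl 0, Dl 1, Sl 1, Kl 1])"
    by (rule Ktilde_central)
  also have "map_eq 1 \<dots> (lcomp (ltens 1 lid Ktilde) \<Delta>)"
    using map_eq_sym[OF convolution_diagram(2)[OF is_map_struct(1) K\<^sub>t]] by simp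
  finally show ?thesis .
qed

end
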